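(* Let $M,N\ge 1$ and $p,r\ge 1$ be integers, and let $c_p^r=\mathrm{Tr}(T_p^r)$ be the truncated moments of the deformed Fourier model defined in the context. Then $$c_p^r=\frac{1}{M^{r+1}N}\,\#\Big\{(i,a,b)\in\mathbb Z_M^r\times\mathbb Z_M^p\times\mathbb Z_N^p\ :\ \text{condition }(E_x)\text{ holds for every }x=1,\dots,r\Big\},$$ where $(E_x)$ is the condition that the two multisets (of $2p$ elements of $\mathbb Z_M\times\mathbb Z_N$, counted with multiplicity) $$\big\{(i_x+a_y,b_y),\ (i_{x+1}+a_y,b_{y+1})\ :\ y=1,\dots,p\big\}\quad\text{and}\quad\big\{(i_x+a_y,b_{y+1}),\ (i_{x+1}+a_y,b_y)\ :\ y=1,\dots,p\big\}$$ coincide, with cyclic conventions $i_{r+1}=i_1$, $b_{p+1}=b_1$, and addition taken in $\mathbb Z_M$.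
   Context: Let $w_M=e^{2\pi\sqrt{-1}/M}$, $w_N=e^{2\pi\sqrt{-1}/N}$, $I=\mathbb Z_M\times\mathbb Z_N$, $K=MN$. For $Q=(Q_{ib})_{i\in\mathbb Z_M,b\in\mathbb Z_N}\in\mathbb T^{MN}$ define the matrix $H(Q)\in M_I(\mathbb C)$ by $H(Q)_{(i,a),(j,b)}=Q_{ib}\,w_M^{ij}\,w_N^{ab}$ (a complex Hadamard matrix). Write $H_\alpha(Q)\in\mathbb T^{I}$ for its row indexed by $\alpha\in I$. For $\alpha,\beta\in I$ let $\xi=H_\alpha(Q)/H_\beta(Q)$ (entrywise quotient) and let $U_{\alpha\beta}(Q)=\frac1K\xi\xi^*\in M_I(\mathbb C)$ be the orthogonal projection onto $\mathbb C\xi$. Let $dQ$ be the normalized Haar measure on $\mathbb T^{MN}$. Define the matrix $T_p$ indexed by $I^p\times I^p$ by $(T_p)_{\alpha_1\ldots\alpha_p,\beta_1\ldots\beta_p}=\int_{\mathbb T^{MN}}\frac1K\mathrm{Tr}\big(U_{\alpha_1\beta_1}(Q)\cdots U_{\alpha_p\beta_p}(Q)\big)\,dQ$, and set $c_p^r=\mathrm{Tr}(T_p^r)$, where $\mathrm{Tr}$ denotes the usual (unnormalized) matrix trace. *)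

theory Defs
  imports "HOL-Probability.Probability" "HOL-Library.Multiset"
begin

text \<open>Matrices indexed by a finite set S are represented as functions S \<Rightarrow> S \<Rightarrow> complex.\<close>

definition mmult :: "'i set \<Rightarrow> ('i \<Rightarrow> 'i \<Rightarrow> complex) \<Rightarrow> ('i \<Rightarrow> 'i \<Rightarrow> complex) \<Rightarrow> 'i \<Rightarrow> 'i \<Rightarrow> complex" where
  "mmult S A B = (\<lambda>x z. \<Sum>y\<in>S. A x y * B y z)"

definition mid :: "'i \<Rightarrow> 'i \<Rightarrow> complex" where
  "mid = (\<lambda>x y. if x = y then 1 else 0)"

definition mtrace :: "'i set \<Rightarrow> ('i \<Rightarrow> 'i \<Rightarrow> complex) \<Rightarrow> complex" where
  "mtrace S A = (\<Sum>x\<in>S. A x x)"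

definition mlistprod :: "'i set \<Rightarrow> ('i \<Rightarrow> 'i \<Rightarrow> complex) list \<Rightarrow> 'i \<Rightarrow> 'i \<Rightarrow> complex" where
  "mlistprod S As = foldr (mmult S) As mid"

fun mpow :: "'i set \<Rightarrow> ('i \<Rightarrow> 'i \<Rightarrow> complex) \<Rightarrow> nat \<Rightarrow> 'i \<Rightarrow> 'i \<Rightarrow> complex" where
  "mpow S A 0 = mid"
| "mpow S A (Suc n) = mmult S (mpow S A n) A"

text \<open>Index set I = Z_M x Z_N, represented as {0..<M} x {0..<N}.\<close>
definition idx :: "nat \<Rightarrow> nat \<Rightarrow> (nat \<times> nat) set" where
  "idx M N = {0..<M} \<times> {0..<N}"

definition root_unity :: "nat \<Rightarrow> complex" where
  "root_unity M = cis (2 * pi / real M)"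

definition Hmat :: "nat \<Rightarrow> nat \<Rightarrow> (nat \<times> nat \<Rightarrow> complex) \<Rightarrow> nat \<times> nat \<Rightarrow> nat \<times> nat \<Rightarrow> complex" where
  "Hmat M N Q = (\<lambda>(i,a) (j,b). Q (i,b) * root_unity M ^ (i*j) * root_unity N ^ (a*b))"

definition Umat :: "nat \<Rightarrow> nat \<Rightarrow> (nat \<times> nat \<Rightarrow> complex) \<Rightarrow> nat \<times> nat \<Rightarrow> nat \<times> nat \<Rightarrow> nat \<times> nat \<Rightarrow> nat \<times> nat \<Rightarrow> complex" where
  "Umat M N Q \<alpha> \<beta> =
     (let \<xi> = (\<lambda>\<gamma>. Hmat M N Q \<alpha> \<gamma> / Hmat M N Q \<beta> \<gamma>)
      in (\<lambda>\<gamma> \<delta>. \<xi> \<gamma> * cnj (\<xi> \<delta>) / of_nat (M * N)))"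

text \<open>Normalized Haar measure on the unit circle T (pushforward of uniform measure on [0,1)),
  and the product (normalized Haar) measure on T^{MN}.\<close>
definition circle_haar :: "complex measure" where
  "circle_haar = distr (uniform_measure lborel {0..<1::real}) borel (\<lambda>t. cis (2 * pi * t))"

definition torus_haar :: "nat \<Rightarrow> nat \<Rightarrow> (nat \<times> nat \<Rightarrow> complex) measure" where
  "torus_haar M N = PiM (idx M N) (\<lambda>_. circle_haar)"

text \<open>Index set I^p, as functions {0..<p} -> I.\<close>
definition idxp :: "nat \<Rightarrow> nat \<Rightarrow> nat \<Rightarrow> (nat \<Rightarrow> nat \<times> nat) set" where
  "idxp M N p = PiE {0..<p} (\<lambda>_. idx M N)"

definition Tmat :: "nat \<Rightarrow> nat \<Rightarrow> nat \<Rightarrow> (nat \<Rightarrow> nat \<times> nat) \<Rightarrow> (nat \<Rightarrow> nat \<times> nat) \<Rightarrow> complex" where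
  "Tmat M N p \<alpha> \<beta> =
     integral\<^sup>L (torus_haar M N)
       (\<lambda>Q. mtrace (idx M N) (mlistprod (idx M N) (map (\<lambda>k. Umat M N Q (\<alpha> k) (\<beta> k)) [0..<p]))
             / of_nat (M * N))"

definition cpr :: "nat \<Rightarrow> nat \<Rightarrow> nat \<Rightarrow> nat \<Rightarrow> complex" where
  "cpr M N p r = mtrace (idxp M N p) (mpow (idxp M N p) (Tmat M N p) r)"

text \<open>Condition (E_x), with indices shifted to start at 0 (x < r, y < p), cyclic conventions,
  addition in Z_M.\<close>
definition cond_E :: "nat \<Rightarrow> nat \<Rightarrow> nat \<Rightarrow> (nat \<Rightarrow> nat) \<Rightarrow> (nat \<Rightarrow> nat) \<Rightarrow> (nat \<Rightarrow> nat) \<Rightarrow> nat \<Rightarrow> bool" where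
  "cond_E M p r i a b x \<longleftrightarrow>
     image_mset (\<lambda>y. ((i x + a y) mod M, b y)) (mset [0..<p])
       + image_mset (\<lambda>y. ((i ((x+1) mod r) + a y) mod M, b ((y+1) mod p))) (mset [0..<p])
     = image_mset (\<lambda>y. ((i x + a y) mod M, b ((y+1) mod p))) (mset [0..<p])
       + image_mset (\<lambda>y. ((i ((x+1) mod r) + a y) mod M, b y)) (mset [0..<p])"

end

theory Submission
  imports Defs
begin

text \<open>
  Expanding the trace of a product of the rank-one projections \<open>U\<close> writes each entry of \<open>T\<^sub>p\<close>
  as a sum over \<open>\<gamma> \<in> I\<^sup>p\<close> of monomials in the entries of \<open>Q\<close> and their conjugates, times
  roots of unity. Integration against the Haar measure keeps exactly the balanced monomials, in which
  every \<open>Q\<^sub>q\<close> occurs as often as its conjugate; the sum over the \<open>\<int>\<^sub>M\<close>-coordinates of \<open>\<gamma>\<close> is a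
  character sum. The trace of \<open>T\<^sub>p\<^sup>r\<close> is a sum over closed walks of length \<open>r\<close>, and a summation
  by parts turns the sum over the \<open>\<int>\<^sub>N\<close>-coordinates of the walk into a second character sum. Both
  character sums select the tables \<open>S x k \<equiv> i\<^sub>x + a\<^sub>k\<close>, and each such table comes from exactly
  \<open>n\<close> pairs \<open>(i, a)\<close>. Finally the balance condition is invariant under translations of the
  \<open>\<int>\<^sub>N\<close>-coordinate, and a rotation of \<open>b\<close> turns it into condition \<open>(E\<^sub>x)\<close>.
\<close>

lemma sum_PiE_insert:
  assumes "x \<notin> S"
  shows "(\<Sum>g\<in>PiE (insert x S) T. h g) = (\<Sum>y\<in>T x. \<Sum>g\<in>PiE S T. h (g(x := y)))"
proof -
  have "(\<Sum>g\<in>PiE (insert x S) T. h g) = sum (h \<circ> (\<lambda>(y, g). g(x := y))) (T x \<times> PiE S T)"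
    unfolding PiE_insert_eq by (rule sum.reindex[OF inj_combinator[OF assms]])
  then show ?thesis
    by (simp add: sum.cartesian_product split_def)
qed

lemma sum_PiE_Times:
  "(\<Sum>\<gamma>\<in>PiE I (\<lambda>i. A i \<times> B i). f \<gamma>) = (\<Sum>j\<in>PiE I A. \<Sum>b\<in>PiE I B. f (\<lambda>i\<in>I. (j i, b i)))"
proof -
  have "(\<Sum>j\<in>PiE I A. \<Sum>b\<in>PiE I B. f (\<lambda>i\<in>I. (j i, b i)))
      = (\<Sum>q\<in>PiE I A \<times> PiE I B. f (\<lambda>i\<in>I. (fst q i, snd q i)))"
    by (simp add: sum.cartesian_product split_def)
  also have "\<dots> = (\<Sum>\<gamma>\<in>PiE I (\<lambda>i. A i \<times> B i). f \<gamma>)"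
  proof (rule sum.reindex_bij_witness[where i = "\<lambda>\<gamma>. (\<lambda>i\<in>I. fst (\<gamma> i), \<lambda>i\<in>I. snd (\<gamma> i))"
                                         and j = "\<lambda>q. \<lambda>i\<in>I. (fst q i, snd q i)"])
    fix q assume "q \<in> PiE I A \<times> PiE I B"
    then show "(\<lambda>i\<in>I. fst ((\<lambda>i\<in>I. (fst q i, snd q i)) i), \<lambda>i\<in>I. snd ((\<lambda>i\<in>I. (fst q i, snd q i)) i)) = q"
      by (cases q) (auto simp: PiE_def extensional_def fun_eq_iff)
  next
    fix \<gamma> assume "\<gamma> \<in> PiE I (\<lambda>i. A i \<times> B i)"
    then show "(\<lambda>i\<in>I. (fst ((\<lambda>i\<in>I. fst (\<gamma> i), \<lambda>i\<in>I. snd (\<gamma> i))) i,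
                        snd ((\<lambda>i\<in>I. fst (\<gamma> i), \<lambda>i\<in>I. snd (\<gamma> i))) i)) = \<gamma>"
      by (auto simp: PiE_def extensional_def fun_eq_iff)
  qed (auto simp: PiE_def Pi_def mem_Times_iff)
  finally show ?thesis ..
qed

lemma sum_PiE_PiE_Times:
  "(\<Sum>A\<in>PiE I (\<lambda>_. PiE J (\<lambda>_. X \<times> Y)). f A)
 = (\<Sum>S\<in>PiE I (\<lambda>_. PiE J (\<lambda>_. X)). \<Sum>U\<in>PiE I (\<lambda>_. PiE J (\<lambda>_. Y)). f (\<lambda>x\<in>I. \<lambda>k\<in>J. (S x k, U x k)))"
proof -
  let ?pair = "\<lambda>q. \<lambda>x\<in>I. \<lambda>k\<in>J. (fst q x k, snd q x k)"
  let ?unpair = "\<lambda>A. (\<lambda>x\<in>I. \<lambda>k\<in>J. fst (A x k), \<lambda>x\<in>I. \<lambda>k\<in>J. snd (A x k))"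
  have restrict_id: "(\<lambda>x\<in>I. restrict (S x) J) = S" if "S \<in> PiE I (\<lambda>_. PiE J (\<lambda>_. Z))" for S :: "_ \<Rightarrow> _ \<Rightarrow> 'z" and Z
  proof (intro ext)
    fix x k
    show "(\<lambda>x\<in>I. restrict (S x) J) x k = S x k"
      using that PiE_arb[OF that, of x] PiE_arb[OF PiE_mem[OF that], of x k] by (cases "x \<in> I") auto
  qed
  have "(\<Sum>S\<in>PiE I (\<lambda>_. PiE J (\<lambda>_. X)). \<Sum>U\<in>PiE I (\<lambda>_. PiE J (\<lambda>_. Y)). f (\<lambda>x\<in>I. \<lambda>k\<in>J. (S x k, U x k)))
      = (\<Sum>q\<in>PiE I (\<lambda>_. PiE J (\<lambda>_. X)) \<times> PiE I (\<lambda>_. PiE J (\<lambda>_. Y)). f (?pair q))"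
    by (simp add: sum.cartesian_product split_def)
  also have "\<dots> = (\<Sum>A\<in>PiE I (\<lambda>_. PiE J (\<lambda>_. X \<times> Y)). f A)"
  proof (rule sum.reindex_bij_witness[where i = ?unpair and j = ?pair])
    fix q assume q: "q \<in> PiE I (\<lambda>_. PiE J (\<lambda>_. X)) \<times> PiE I (\<lambda>_. PiE J (\<lambda>_. Y))"
    have "?unpair (?pair q) = ((\<lambda>x\<in>I. restrict (fst q x) J), (\<lambda>x\<in>I. restrict (snd q x) J))"
      by (auto intro!: restrict_ext)
    then show "?unpair (?pair q) = q"
      using q restrict_id[of "fst q" X] restrict_id[of "snd q" Y] by (cases q) simp
  next
    fix A assume A: "A \<in> PiE I (\<lambda>_. PiE J (\<lambda>_. X \<times> Y))"
    have "?pair (?unpair A) = (\<lambda>x\<in>I. restrict (A x) J)"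
      by (auto intro!: restrict_ext)
    then show "?pair (?unpair A) = A"
      using restrict_id[OF A] by simp
  qed (auto simp: PiE_def Pi_def mem_Times_iff extensional_def)
  finally show ?thesis ..
qed

lemma prod_of_bool: "finite A \<Longrightarrow> (\<Prod>x\<in>A. of_bool (P x)) = (of_bool (\<forall>x\<in>A. P x) :: 'a::comm_semiring_1)"
  by (induction A rule: finite_induct) auto

lemma prod_mset_image_eq_prod_count:
  assumes "finite S" "set_mset A \<subseteq> S"
  shows "prod_mset (image_mset F A) = (\<Prod>q\<in>S. F q ^ count A q)"
  using assms(2)
proof (induction A)
  case empty
  then show ?case by simp
next
  case (add x A)
  then have "x \<in> S" "set_mset A \<subseteq> S" by auto
  have "(\<Prod>q\<in>S. F q ^ count (add_mset x A) q) = (\<Prod>q\<in>S. F q ^ count A q * (if q = x then F q else 1))"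
    by (intro prod.cong refl) (auto simp: mult.commute)
  also have "\<dots> = (\<Prod>q\<in>S. F q ^ count A q) * F x"
    using assms(1) \<open>x \<in> S\<close> by (simp add: prod.distrib)
  finally show ?case
    using add.IH[OF \<open>set_mset A \<subseteq> S\<close>] by (simp add: mult.commute)
qed

lemma prod_mset_image_upt: "prod_mset (image_mset F (image_mset g (mset [0..<p]))) = (\<Prod>k<p. F (g k))"
  by (simp add: prod_unfold_prod_mset lessThan_atLeast0 image_mset.compositionality comp_def)

lemma count_eq_on_iff_eq:
  assumes "set_mset A \<subseteq> S" "set_mset B \<subseteq> S"
  shows "(\<forall>q\<in>S. count A q = count B q) \<longleftrightarrow> A = B"
  using assms by (auto simp: multiset_eq_iff) (metis count_inI in_mono)

lemma image_mset_eq_iff_inj_on: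
  assumes "inj_on f (set_mset A \<union> set_mset B)"
  shows "image_mset f A = image_mset f B \<longleftrightarrow> A = B"
  using image_mset_eq_image_mset_plusD[of f A B "{#}"] assms by auto

lemma mod_pred_Suc: "k < (P::nat) \<Longrightarrow> ((k+1) mod P + P - 1) mod P = k"
proof -
  assume "k < P"
  then have "(k+1) mod P + P - 1 = (k+1) mod P + (P - 1)" by arith
  then have "((k+1) mod P + P - 1) mod P = (k + 1 + (P - 1)) mod P"
    by (simp only: mod_add_left_eq)
  also have "k + 1 + (P - 1) = k + P" using \<open>k < P\<close> by simp
  finally show ?thesis using \<open>k < P\<close> by simp
qed

lemma mod_Suc_pred: "k < (P::nat) \<Longrightarrow> ((k+P-1) mod P + 1) mod P = k"
proof -
  assume "k < P"
  have "((k+P-1) mod P + 1) mod P = (k + P - 1 + 1) mod P"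
    by (rule mod_add_left_eq)
  also have "k + P - 1 + 1 = k + P" using \<open>k < P\<close> by simp
  finally show ?thesis using \<open>k < P\<close> by simp
qed

lemma sum_cyclic_shift:
  assumes "0 < (P::nat)"
  shows "(\<Sum>k<P. f k ((k+1) mod P)) = (\<Sum>k<P. f ((k+P-1) mod P) k)"
proof (rule sum.reindex_bij_witness[where j = "\<lambda>k. (k+1) mod P" and i = "\<lambda>k. (k+P-1) mod P"])
  fix k assume "k \<in> {..<P}"
  then show "((k+1) mod P + P - 1) mod P = k"
            "f (((k+1) mod P + P - 1) mod P) ((k+1) mod P) = f k ((k+1) mod P)"
    using mod_pred_Suc[of k P] by simp_all
  show "(k+1) mod P \<in> {..<P}"
    using assms by simp
next
  fix k assume "k \<in> {..<P}"
  then show "((k+P-1) mod P + 1) mod P = k" "(k+P-1) mod P \<in> {..<P}"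
    using assms mod_Suc_pred[of k P] by simp_all
qed

lemma sum_by_parts_cyclic:
  fixes b u :: "nat \<Rightarrow> int"
  assumes "0 < P"
  shows "(\<Sum>k<P. b k * (u ((k+1) mod P) - u k)) = (\<Sum>k<P. u k * (b ((k+P-1) mod P) - b k))"
proof -
  have "(\<Sum>k<P. b k * u ((k+1) mod P)) = (\<Sum>k<P. b ((k+P-1) mod P) * u k)"
    by (rule sum_cyclic_shift[OF assms])
  then show ?thesis
    by (simp add: right_diff_distrib sum_subtractf mult.commute)
qed

lemma image_mset_rotate:
  assumes "0 < p"
  shows "image_mset (\<lambda>k. f ((k+1) mod p)) (mset [0..<p]) = image_mset f (mset [0..<p])"
proof -
  have "bij_betw (\<lambda>k. (k+1) mod p) {0..<p} {0..<p}"
  proof (rule bij_betw_byWitness[where f' = "\<lambda>k. (k+p-1) mod p"])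
    show "\<forall>k\<in>{0..<p}. ((k+1) mod p + p - 1) mod p = k"
      using mod_pred_Suc[of _ p] by simp
    show "\<forall>k\<in>{0..<p}. ((k+p-1) mod p + 1) mod p = k"
      using mod_Suc_pred[of _ p] by simp
  qed (use assms in auto)
  then have "image_mset (\<lambda>k. (k+1) mod p) (mset_set {0..<p}) = mset_set {0..<p}"
    by (simp add: bij_betw_def image_mset_mset_set)
  then have "image_mset f (image_mset (\<lambda>k. (k+1) mod p) (mset [0..<p])) = image_mset f (mset [0..<p])"
    by simp
  then show ?thesis
    by (simp add: image_mset.compositionality comp_def)
qed

lemma sum_vectors_rotate:
  assumes p: "0 < (p::nat)"
  shows "(\<Sum>b\<in>PiE {0..<p} (\<lambda>_. B). F b) = (\<Sum>b\<in>PiE {0..<p} (\<lambda>_. B). F (\<lambda>k\<in>{0..<p}. b ((k+1) mod p)))"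
proof (rule sum.reindex_bij_witness[where j = "\<lambda>b. \<lambda>k\<in>{0..<p}. b ((k+p-1) mod p)"
                                         and i = "\<lambda>b. \<lambda>k\<in>{0..<p}. b ((k+1) mod p)"])
  fix b assume b: "b \<in> PiE {0..<p} (\<lambda>_. B)"
  have "(\<lambda>k\<in>{0..<p}. (\<lambda>k\<in>{0..<p}. b ((k+p-1) mod p)) ((k+1) mod p)) = b"
    using p PiE_arb[OF b] mod_pred_Suc[of _ p] by (auto simp: fun_eq_iff)
  then show "(\<lambda>k\<in>{0..<p}. (\<lambda>k\<in>{0..<p}. b ((k+p-1) mod p)) ((k+1) mod p)) = b"
            "F (\<lambda>k\<in>{0..<p}. (\<lambda>k\<in>{0..<p}. b ((k+p-1) mod p)) ((k+1) mod p)) = F b"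
    by simp_all
  show "(\<lambda>k\<in>{0..<p}. b ((k+p-1) mod p)) \<in> PiE {0..<p} (\<lambda>_. B)"
    using b p by auto
next
  fix b assume b: "b \<in> PiE {0..<p} (\<lambda>_. B)"
  show "(\<lambda>k\<in>{0..<p}. (\<lambda>k\<in>{0..<p}. b ((k+1) mod p)) ((k+p-1) mod p)) = b"
    using p PiE_arb[OF b] mod_Suc_pred[of _ p] by (auto simp: fun_eq_iff)
  show "(\<lambda>k\<in>{0..<p}. b ((k+1) mod p)) \<in> PiE {0..<p} (\<lambda>_. B)"
    using b p by auto
qed

lemma dvd_of_nat_mod_diff: "int n dvd int (u mod n) - int u"
  by (simp add: mod_eq_dvd_iff[symmetric] of_nat_mod)

lemma mod_eq_if_dvd_of_nat_diff:
  assumes "b < n" "int n dvd int a - int b"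
  shows "a mod n = b"
proof -
  have "int a mod int n = int b mod int n"
    using assms(2) by (simp only: mod_eq_dvd_iff)
  then show ?thesis
    using assms(1) by (simp flip: of_nat_mod)
qed

section \<open>Roots of unity\<close>

definition root_unity_int :: "nat \<Rightarrow> int \<Rightarrow> complex" where
  "root_unity_int n k = cis (2 * pi * of_int k / real n)"

lemma root_unity_power: "root_unity n ^ e = root_unity_int n (int e)"
  by (simp add: root_unity_def root_unity_int_def Complex.DeMoivre algebra_simps)

lemma root_unity_int_add: "root_unity_int n a * root_unity_int n b = root_unity_int n (a + b)"
  by (simp add: root_unity_int_def cis_mult add_divide_distrib algebra_simps)

lemma cnj_root_unity_int: "cnj (root_unity_int n a) = root_unity_int n (- a)"
  by (simp add: root_unity_int_def cis_cnj)

lemma root_unity_int_0 [simp]: "root_unity_int n 0 = 1"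
  by (simp add: root_unity_int_def)

lemma norm_root_unity_int [simp]: "norm (root_unity_int n a) = 1"
  by (simp add: root_unity_int_def)

lemma root_unity_int_power: "root_unity_int n a ^ m = root_unity_int n (int m * a)"
  by (simp add: root_unity_int_def Complex.DeMoivre algebra_simps)

lemma prod_root_unity_int:
  "finite A \<Longrightarrow> (\<Prod>i\<in>A. root_unity_int n (f i)) = root_unity_int n (\<Sum>i\<in>A. f i)"
  by (induction A rule: finite_induct) (simp_all add: root_unity_int_add[symmetric])

lemma root_unity_int_eq_1_iff:
  assumes "0 < n"
  shows "root_unity_int n a = 1 \<longleftrightarrow> int n dvd a"
proof
  assume "root_unity_int n a = 1"
  then have "cos (2 * pi * of_int a / real n) = 1"
    unfolding root_unity_int_def by (simp add: complex_eq_iff)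
  then obtain k :: int where "2 * pi * of_int a / real n = k * 2 * pi"
    by (auto simp: cos_one_2pi_int)
  then have "real_of_int a = real n * of_int k"
    using assms by (simp add: field_simps)
  then have "a = int n * k"
    by (metis of_int_eq_iff of_int_mult of_int_of_nat_eq)
  then show "int n dvd a" by simp
next
  assume "int n dvd a"
  then obtain k where "a = int n * k" by (auto elim: dvdE)
  then have "2 * pi * of_int a / real n = 2 * pi * of_int k"
    using assms by simp
  then show "root_unity_int n a = 1"
    unfolding root_unity_int_def by simp
qed

lemma sum_root_unity_int:
  assumes "0 < n"
  shows "(\<Sum>u\<in>{0..<n}. root_unity_int n (int u * g)) = of_nat n * of_bool (int n dvd g)"
proof (cases "int n dvd g")
  case True
  then have "root_unity_int n (int u * g) = 1" for u
    using assms by (simp add: root_unity_int_eq_1_iff)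
  then show ?thesis using True by simp
next
  case False
  define w where "w = root_unity_int n g"
  have "w \<noteq> 1" using False assms by (simp add: w_def root_unity_int_eq_1_iff)
  have "(\<Sum>u\<in>{0..<n}. root_unity_int n (int u * g)) = (\<Sum>u<n. w ^ u)"
    by (simp add: w_def root_unity_int_power atLeast0LessThan)
  also have "\<dots> = (w ^ n - 1) / (w - 1)"
    using \<open>w \<noteq> 1\<close> by (rule geometric_sum)
  also have "w ^ n = 1"
    using assms by (simp add: w_def root_unity_int_power root_unity_int_eq_1_iff)
  finally show ?thesis using False by simp
qed

lemma sum_PiE_prod_root_unity_int:
  assumes "finite K" "0 < n"
  shows "(\<Sum>j\<in>PiE K (\<lambda>_. {0..<n}). \<Prod>k\<in>K. root_unity_int n (int (j k) * g k))
       = of_nat n ^ card K * of_bool (\<forall>k\<in>K. int n dvd g k)"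
proof -
  have "(\<Sum>j\<in>PiE K (\<lambda>_. {0..<n}). \<Prod>k\<in>K. root_unity_int n (int (j k) * g k))
      = (\<Prod>k\<in>K. \<Sum>u\<in>{0..<n}. root_unity_int n (int u * g k))"
    using assms(1) by (simp add: prod_sum_PiE)
  also have "\<dots> = (\<Prod>k\<in>K. of_nat n * of_bool (int n dvd g k))"
    using assms(2) by (simp add: sum_root_unity_int)
  finally show ?thesis
    using assms(1) by (simp add: prod.distrib prod_of_bool)
qed

section \<open>Moments of the Haar measure on the torus\<close>

lemma measurable_cis_2pi:
  "(\<lambda>t. cis (2 * pi * t)) \<in> borel_measurable (uniform_measure lborel {0..<1::real})"
  by (simp add: measurable_cong_sets[OF sets_uniform_measure refl]
      borel_measurable_continuous_onI continuous_intros)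

lemma prob_space_circle_haar: "prob_space circle_haar"
  unfolding circle_haar_def
  by (intro prob_space.prob_space_distr prob_space_uniform_measure measurable_cis_2pi) auto

lemma AE_circle_haar_norm: "AE z in circle_haar. norm z = 1"
  unfolding circle_haar_def by (subst AE_distr_iff[OF measurable_cis_2pi]) auto

lemma integral_cis_2pi_int:
  fixes k :: int
  shows "integral\<^sup>L lborel (\<lambda>x. indicator {0..1::real} x *\<^sub>R cis (2 * pi * k * x)) = of_bool (k = 0)"
proof (cases "k = 0")
  case True
  have "integral\<^sup>L lborel (\<lambda>x. indicator {0..1::real} x *\<^sub>R cis (2 * pi * k * x)) = of_real 1 - of_real 0"
    using True
    by (intro integral_FTC_atLeastAtMost[where F = of_real])
       (auto intro!: derivative_eq_intros continuous_intros
             simp: has_vector_derivative_def fun_eq_iff scaleR_conv_of_real)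
  then show ?thesis using True by simp
next
  case False
  define c where "c = 2 * pi * real_of_int k"
  have c: "c \<noteq> 0" using False by (simp add: c_def)
  have "integral\<^sup>L lborel (\<lambda>x. indicator {0..1::real} x *\<^sub>R cis (c * x))
      = cis (c * 1) / (\<i> * c) - cis (c * 0) / (\<i> * c)"
  proof (intro integral_FTC_atLeastAtMost[where F = "\<lambda>x. cis (c * x) / (\<i> * c)"])
    fix x :: real
    have "((\<lambda>x. cis (c * x) / (\<i> * c)) has_derivative
           (\<lambda>t. ((c * t) *\<^sub>R (\<i> * cis (c * x))) / (\<i> * c))) (at x within {0..1})"
      by (intro has_derivative_cis derivative_eq_intros) (auto simp: c)
    moreover have "(\<lambda>t. ((c * t) *\<^sub>R (\<i> * cis (c * x))) / (\<i> * c)) = (\<lambda>t. t *\<^sub>R cis (c * x))"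
      using c by (auto simp: scaleR_conv_of_real field_simps)
    ultimately show "((\<lambda>x. cis (c * x) / (\<i> * c)) has_vector_derivative cis (c * x)) (at x within {0..1})"
      by (simp add: has_vector_derivative_def)
  qed (auto intro!: continuous_intros)
  also have "cis (c * 1) = 1"
    unfolding c_def by (metis cis_multiple_2pi Ints_of_int mult.assoc mult.commute mult_1)
  finally show ?thesis using False by (simp add: c_def mult.assoc)
qed

lemma circle_haar_moment:
  "integral\<^sup>L circle_haar (\<lambda>z. z ^ m * cnj z ^ n) = of_bool (m = n)"
proof -
  define k where "k = int m - int n"
  have cis_moment: "cis t ^ m * cnj (cis t) ^ n = cis (2 * pi * k * (t / (2 * pi)))" for t
  proof -
    have "cis t ^ m * cnj (cis t) ^ n = cis (real m * t) * cis (real n * - t)"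
      by (simp only: cis_cnj Complex.DeMoivre)
    then show ?thesis by (simp add: k_def cis_mult algebra_simps)
  qed
  have "integral\<^sup>L circle_haar (\<lambda>z. z ^ m * cnj z ^ n)
      = integral\<^sup>L (uniform_measure lborel {0..<1::real})
          (\<lambda>t. cis (2 * pi * t) ^ m * cnj (cis (2 * pi * t)) ^ n)"
    unfolding circle_haar_def
    by (rule integral_distr[OF measurable_cis_2pi]) (intro borel_measurable_continuous_onI continuous_intros)
  also have "\<dots> = integral\<^sup>L lborel (\<lambda>t. indicator {0..<1::real} t *\<^sub>R cis (2 * pi * k * t))"
  proof -
    have "uniform_measure lborel {0..<1::real} = density lborel (\<lambda>t. ennreal (indicator {0..<1::real} t))"
      unfolding uniform_measure_def by (simp add: divide_ennreal_def ennreal_indicator)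
    then show ?thesis
      by (simp only:, subst integral_density)
         (auto simp: cis_moment
             intro!: borel_measurable_continuous_onI continuous_intros Bochner_Integration.integral_cong)
  qed
  also have "\<dots> = integral\<^sup>L lborel (\<lambda>t. indicator {0..1::real} t *\<^sub>R cis (2 * pi * k * t))"
  proof (rule integral_cong_AE)
    show "AE t in lborel. indicator {0..<1::real} t *\<^sub>R cis (2 * pi * k * t)
                        = indicator {0..1::real} t *\<^sub>R cis (2 * pi * k * t)"
      using AE_lborel_singleton[of 1] by eventually_elim (auto split: split_indicator)
  qed (intro borel_measurable_scaleR borel_measurable_indicator
         borel_measurable_continuous_onI continuous_intros; simp)+
  also have "\<dots> = of_bool (m = n)"
    unfolding integral_cis_2pi_int by (simp add: k_def)
  finally show ?thesis .
qed

lemma integrable_circle_haar_monomial: "integrable circle_haar (\<lambda>z. z ^ m * cnj z ^ n)"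
  unfolding circle_haar_def
proof (subst integrable_distr_eq[OF measurable_cis_2pi])
  interpret prob_space "uniform_measure lborel {0..<1::real}"
    by (intro prob_space_uniform_measure) auto
  show "(\<lambda>z. z ^ m * cnj z ^ n) \<in> borel_measurable borel"
    by (intro borel_measurable_continuous_onI continuous_intros)
  show "integrable (uniform_measure lborel {0..<1}) (\<lambda>t. cis (2 * pi * t) ^ m * cnj (cis (2 * pi * t)) ^ n)"
    by (rule integrable_const_bound[where B = 1])
       (auto simp: norm_mult norm_power measurable_cong_sets[OF sets_uniform_measure refl]
             intro!: borel_measurable_continuous_onI continuous_intros)
qed

lemma product_prob_space_circle_haar: "product_prob_space (\<lambda>_. circle_haar)"
  by (simp add: product_prob_space_def product_sigma_finite_def prob_space_circle_haar
      prob_space_imp_sigma_finite product_prob_space_axioms_def)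

lemma finite_idx [simp]: "finite (idx M N)"
  by (simp add: idx_def)

lemma torus_haar_moment:
  "integral\<^sup>L (torus_haar M N) (\<lambda>Q. \<Prod>q\<in>idx M N. Q q ^ e q * cnj (Q q) ^ f q)
     = of_bool (\<forall>q\<in>idx M N. e q = f q)"
proof -
  interpret product_prob_space "\<lambda>_. circle_haar" by (rule product_prob_space_circle_haar)
  have "integral\<^sup>L (torus_haar M N) (\<lambda>Q. \<Prod>q\<in>idx M N. Q q ^ e q * cnj (Q q) ^ f q)
      = (\<Prod>q\<in>idx M N. integral\<^sup>L circle_haar (\<lambda>z. z ^ e q * cnj z ^ f q))"
    unfolding torus_haar_def
    by (rule product_integral_prod) (auto intro: integrable_circle_haar_monomial)
  then show ?thesis
    by (simp add: circle_haar_moment)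
qed

lemma integrable_torus_haar_monomial:
  "integrable (torus_haar M N) (\<lambda>Q. \<Prod>q\<in>idx M N. Q q ^ e q * cnj (Q q) ^ f q)"
proof -
  interpret product_prob_space "\<lambda>_. circle_haar" by (rule product_prob_space_circle_haar)
  show ?thesis
    unfolding torus_haar_def
    by (rule product_integrable_prod) (auto intro: integrable_circle_haar_monomial)
qed

lemma AE_torus_haar_norm: "AE Q in torus_haar M N. \<forall>q\<in>idx M N. norm (Q q) = 1"
  unfolding torus_haar_def
  by (rule eventually_ball_finite)
     (auto intro!: AE_PiM_component prob_space_circle_haar AE_circle_haar_norm)

lemma borel_measurable_cnj [measurable]:
  "f \<in> borel_measurable M \<Longrightarrow> (\<lambda>x. cnj (f x)) \<in> borel_measurable M"
  by (rule measurable_compose[OF _ borel_measurable_continuous_onI[OF continuous_on_cnj[OF continuous_on_id]]])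

lemma borel_measurable_torus_component:
  assumes "q \<in> idx M N"
  shows "(\<lambda>Q. Q q) \<in> borel_measurable (torus_haar M N)"
proof -
  have "(\<lambda>Q. Q q) \<in> measurable (PiM (idx M N) (\<lambda>_. circle_haar)) circle_haar"
    using assms by (rule measurable_component_singleton)
  moreover have "measurable (PiM (idx M N) (\<lambda>_. circle_haar)) circle_haar
               = measurable (PiM (idx M N) (\<lambda>_. circle_haar)) borel"
    by (rule measurable_cong_sets) (simp_all add: circle_haar_def)
  ultimately show ?thesis
    unfolding torus_haar_def by simp
qed

section \<open>Traces of matrix products\<close>

lemma mlistprod_rank_one:
  assumes "finite S" "m < n" "y \<in> S"
  shows "mlistprod S (map (\<lambda>k x y. f k x * g k y) [m..<n]) x y
         = f m x * (\<Prod>k\<in>{m..<n-1}. \<Sum>z\<in>S. g k z * f (Suc k) z) * g (n-1) y"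
  using assms(2)
proof (induction "n - m" arbitrary: m x)
  case 0
  then show ?case by simp
next
  case (Suc d)
  have upt: "[m..<n] = m # [Suc m..<n]" using Suc.prems by (simp add: upt_conv_Cons)
  show ?case
  proof (cases "Suc m = n")
    case True
    then show ?thesis
      using assms(1,3) by (auto simp: upt mlistprod_def mmult_def mid_def of_bool_def[symmetric])
  next
    case False
    then have m: "Suc m < n" using Suc.prems by simp
    have "mlistprod S (map (\<lambda>k x y. f k x * g k y) [m..<n]) x y
        = (\<Sum>z\<in>S. f m x * g m z * mlistprod S (map (\<lambda>k x y. f k x * g k y) [Suc m..<n]) z y)"
      by (simp add: upt mlistprod_def mmult_def)
    also have "\<dots> = (\<Sum>z\<in>S. f m x * g m z *
                    (f (Suc m) z * (\<Prod>k\<in>{Suc m..<n-1}. \<Sum>z\<in>S. g k z * f (Suc k) z) * g (n-1) y))"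
      using Suc.hyps m by simp
    also have "\<dots> = f m x * (\<Sum>z\<in>S. g m z * f (Suc m) z) *
                    (\<Prod>k\<in>{Suc m..<n-1}. \<Sum>z\<in>S. g k z * f (Suc k) z) * g (n-1) y"
      by (simp add: sum_distrib_left sum_distrib_right mult_ac)
    also have "\<dots> = f m x * (\<Prod>k\<in>{m..<n-1}. \<Sum>z\<in>S. g k z * f (Suc k) z) * g (n-1) y"
      using m by (simp add: prod.atLeast_Suc_lessThan mult_ac)
    finally show ?thesis .
  qed
qed

lemma mtrace_mlistprod_rank_one:
  assumes "finite S" "0 < n"
  shows "mtrace S (mlistprod S (map (\<lambda>k x y. f k x * g k y) [0..<n]))
         = (\<Prod>k<n. \<Sum>z\<in>S. g k z * f ((k+1) mod n) z)"
proof -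
  have "mtrace S (mlistprod S (map (\<lambda>k x y. f k x * g k y) [0..<n]))
      = (\<Sum>x\<in>S. f 0 x * (\<Prod>k\<in>{0..<n-1}. \<Sum>z\<in>S. g k z * f (Suc k) z) * g (n-1) x)"
    unfolding mtrace_def using assms by (intro sum.cong refl mlistprod_rank_one) auto
  also have "\<dots> = (\<Prod>k\<in>{0..<n-1}. \<Sum>z\<in>S. g k z * f (Suc k) z) * (\<Sum>z\<in>S. g (n-1) z * f 0 z)"
    by (simp add: sum_distrib_left sum_distrib_right mult_ac)
  also have "\<dots> = (\<Prod>k\<in>insert (n-1) {0..<n-1}. \<Sum>z\<in>S. g k z * f ((k+1) mod n) z)"
    using assms(2) by (simp add: mult.commute)
  also have "insert (n-1) {0..<n-1} = {..<n}"
    using assms(2) by auto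
  finally show ?thesis .
qed

definition walk :: "nat \<Rightarrow> 'i \<Rightarrow> (nat \<Rightarrow> 'i) \<Rightarrow> 'i \<Rightarrow> nat \<Rightarrow> 'i" where
  "walk n x w y k = (if k = 0 then x else if k \<le> n then w (k - 1) else y)"

lemma mpow_Suc_eq_sum_walks:
  assumes "finite S" "x \<in> S" "y \<in> S"
  shows "mpow S A (Suc n) x y
       = (\<Sum>w\<in>PiE {0..<n} (\<lambda>_. S). \<Prod>k<Suc n. A (walk n x w y k) (walk n x w y (Suc k)))"
  using assms(3)
proof (induction n arbitrary: y)
  case 0
  then show ?case
    using assms(1,2) by (auto simp: mmult_def mid_def walk_def of_bool_def[symmetric])
next
  case (Suc n)
  have extend: "(\<Prod>k<Suc n. A (walk n x w z k) (walk n x w z (Suc k))) * A z y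
      = (\<Prod>k<Suc (Suc n). A (walk (Suc n) x (w(n := z)) y k) (walk (Suc n) x (w(n := z)) y (Suc k)))"
    for w z
  proof -
    have "walk (Suc n) x (w(n := z)) y k = walk n x w z k" if "k \<le> Suc n" for k
      using that by (auto simp: walk_def)
    then show ?thesis
      by (simp add: walk_def)
  qed
  have "mpow S A (Suc (Suc n)) x y = (\<Sum>z\<in>S. mpow S A (Suc n) x z * A z y)"
    by (simp add: mmult_def)
  also have "\<dots> = (\<Sum>z\<in>S. \<Sum>w\<in>PiE {0..<n} (\<lambda>_. S).
                     (\<Prod>k<Suc n. A (walk n x w z k) (walk n x w z (Suc k))) * A z y)"
    using Suc.IH by (simp add: sum_distrib_right)
  also have "\<dots> = (\<Sum>w\<in>PiE {0..<Suc n} (\<lambda>_. S).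
                     \<Prod>k<Suc (Suc n). A (walk (Suc n) x w y k) (walk (Suc n) x w y (Suc k)))"
    unfolding extend by (simp add: atLeast0_lessThan_Suc sum_PiE_insert)
  finally show ?case .
qed

lemma mtrace_mpow_eq_sum_cycles:
  fixes A :: "'i \<Rightarrow> 'i \<Rightarrow> complex"
  assumes "finite S" "0 < r"
  shows "mtrace S (mpow S A r) = (\<Sum>w\<in>PiE {0..<r} (\<lambda>_. S). \<Prod>k<r. A (w k) (w ((k+1) mod r)))"
proof -
  obtain n where r: "r = Suc n" using assms(2) by (cases r) auto
  define close where "close x w = restrict (walk n x w x) {0..<Suc n}" for x :: 'i and w
  have "mtrace S (mpow S A r)
      = (\<Sum>x\<in>S. \<Sum>w\<in>PiE {0..<n} (\<lambda>_. S). \<Prod>k<Suc n. A (walk n x w x k) (walk n x w x (Suc k)))"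
    unfolding mtrace_def r using assms(1) by (intro sum.cong refl mpow_Suc_eq_sum_walks) auto
  also have "\<dots> = (\<Sum>x\<in>S. \<Sum>w\<in>PiE {0..<n} (\<lambda>_. S).
                     \<Prod>k<Suc n. A (close x w k) (close x w ((k+1) mod Suc n)))"
  proof (intro sum.cong refl prod.cong)
    fix x w k assume k: "k \<in> {..<Suc n}"
    then have "(k+1) mod Suc n = (if k < n then k+1 else 0)"
      by (cases "k < n") (auto simp: less_Suc_eq intro: mod_less)
    then show "A (walk n x w x k) (walk n x w x (Suc k)) = A (close x w k) (close x w ((k+1) mod Suc n))"
      using k by (auto simp: walk_def close_def)
  qed
  also have "\<dots> = (\<Sum>q\<in>S \<times> PiE {0..<n} (\<lambda>_. S).
                     (\<lambda>w. \<Prod>k<Suc n. A (w k) (w ((k+1) mod Suc n))) (close (fst q) (snd q)))"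
    by (simp add: sum.cartesian_product split_def)
  also have "\<dots> = (\<Sum>w\<in>PiE {0..<Suc n} (\<lambda>_. S). \<Prod>k<Suc n. A (w k) (w ((k+1) mod Suc n)))"
  proof (rule sum.reindex_bij_witness[where i = "\<lambda>w. (w 0, \<lambda>k\<in>{0..<n}. w (Suc k))"])
    fix q assume "q \<in> S \<times> PiE {0..<n} (\<lambda>_. S)"
    then show "(close (fst q) (snd q) 0, \<lambda>k\<in>{0..<n}. close (fst q) (snd q) (Suc k)) = q"
              "close (fst q) (snd q) \<in> PiE {0..<Suc n} (\<lambda>_. S)"
      by (auto simp: walk_def close_def PiE_def Pi_def extensional_def fun_eq_iff)
  next
    fix w assume "w \<in> PiE {0..<Suc n} (\<lambda>_. S)"
    then show "close (fst (w 0, \<lambda>k\<in>{0..<n}. w (Suc k))) (snd (w 0, \<lambda>k\<in>{0..<n}. w (Suc k))) = w"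
              "(w 0, \<lambda>k\<in>{0..<n}. w (Suc k)) \<in> S \<times> PiE {0..<n} (\<lambda>_. S)"
      by (auto simp: walk_def close_def PiE_def extensional_def fun_eq_iff)
  qed auto
  finally show ?thesis unfolding r .
qed

section \<open>The entries of T_p\<close>

definition row_quotient ::
  "nat \<Rightarrow> nat \<Rightarrow> (nat \<times> nat \<Rightarrow> complex) \<Rightarrow> nat \<times> nat \<Rightarrow> nat \<times> nat \<Rightarrow> nat \<times> nat \<Rightarrow> complex" where
  "row_quotient M N Q \<alpha> \<beta> \<gamma> = Hmat M N Q \<alpha> \<gamma> / Hmat M N Q \<beta> \<gamma>"

definition trace_term ::
  "nat \<Rightarrow> nat \<Rightarrow> nat \<Rightarrow> (nat \<times> nat \<Rightarrow> complex) \<Rightarrow>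
   (nat \<Rightarrow> nat \<times> nat) \<Rightarrow> (nat \<Rightarrow> nat \<times> nat) \<Rightarrow> (nat \<Rightarrow> nat \<times> nat) \<Rightarrow> complex" where
  "trace_term M N p Q \<alpha> \<beta> \<gamma> =
     (\<Prod>k<p. cnj (row_quotient M N Q (\<alpha> k) (\<beta> k) (\<gamma> k)) *
             row_quotient M N Q (\<alpha> ((k+1) mod p)) (\<beta> ((k+1) mod p)) (\<gamma> k))"

lemma mtrace_Umat_product:
  assumes "0 < p"
  shows "mtrace (idx M N) (mlistprod (idx M N) (map (\<lambda>k. Umat M N Q (\<alpha> k) (\<beta> k)) [0..<p])) / of_nat (M * N)
       = (\<Sum>\<gamma>\<in>idxp M N p. trace_term M N p Q \<alpha> \<beta> \<gamma>) / of_nat (M * N) ^ (p + 1)"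
proof -
  let ?K = "of_nat (M * N) :: complex"
  let ?v = "\<lambda>k z. row_quotient M N Q (\<alpha> k) (\<beta> k) z"
  have U: "(\<lambda>k. Umat M N Q (\<alpha> k) (\<beta> k)) = (\<lambda>k x y. (?v k x / ?K) * cnj (?v k y))"
    by (simp add: Umat_def row_quotient_def fun_eq_iff)
  have "mtrace (idx M N) (mlistprod (idx M N) (map (\<lambda>k. Umat M N Q (\<alpha> k) (\<beta> k)) [0..<p]))
      = (\<Prod>k<p. \<Sum>z\<in>idx M N. cnj (?v k z) * (?v ((k+1) mod p) z / ?K))"
    unfolding U by (rule mtrace_mlistprod_rank_one[OF finite_idx assms])
  also have "\<dots> = (\<Prod>k<p. \<Sum>z\<in>idx M N. cnj (?v k z) * ?v ((k+1) mod p) z) / ?K ^ p"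
    by (simp add: sum_divide_distrib[symmetric] prod_dividef)
  also have "(\<Prod>k<p. \<Sum>z\<in>idx M N. cnj (?v k z) * ?v ((k+1) mod p) z)
      = (\<Sum>\<gamma>\<in>idxp M N p. trace_term M N p Q \<alpha> \<beta> \<gamma>)"
    by (simp add: prod_sum_PiE idxp_def trace_term_def lessThan_atLeast0)
  finally show ?thesis
    by (simp add: power_Suc mult.commute)
qed

lemma Hmat_eq:
  "Hmat M N Q (s, u) (j, b) = Q (s, b) * root_unity_int M (int s * int j) * root_unity_int N (int u * int b)"
  by (simp add: Hmat_def root_unity_power)

lemma row_quotient_on_torus:
  assumes "norm (Q (t, b)) = 1"
  shows "row_quotient M N Q (s, u) (t, v) (j, b)
       = Q (s, b) * cnj (Q (t, b)) * root_unity_int M (int j * (int s - int t))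
           * root_unity_int N (int b * (int u - int v))"
proof -
  have unit: "norm (Q (t, b) * root_unity_int M (int t * int j) * root_unity_int N (int v * int b)) = 1"
    using assms by (simp add: norm_mult)
  have "row_quotient M N Q (s, u) (t, v) (j, b)
      = Q (s, b) * root_unity_int M (int s * int j) * root_unity_int N (int u * int b) *
        (cnj (Q (t, b)) * root_unity_int M (- (int t * int j)) * root_unity_int N (- (int v * int b)))"
    unfolding row_quotient_def Hmat_eq complex_div_cnj[of _ "_ * _ * _"] unit
    by (simp add: cnj_root_unity_int)
  also have "\<dots> = Q (s, b) * cnj (Q (t, b))
        * (root_unity_int M (int s * int j) * root_unity_int M (- (int t * int j)))
        * (root_unity_int N (int u * int b) * root_unity_int N (- (int v * int b)))"
    by (simp add: mult_ac)
  finally show ?thesis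
    by (simp add: root_unity_int_add algebra_simps)
qed

lemma trace_factor_on_torus:
  assumes "norm (Q (t, b)) = 1" "norm (Q (t', b)) = 1"
  shows "cnj (row_quotient M N Q (s, u) (t, v) (j, b)) * row_quotient M N Q (s', u') (t', v') (j, b)
       = (Q (t, b) * Q (s', b)) * (cnj (Q (s, b)) * cnj (Q (t', b)))
         * (root_unity_int M (int j * (int s' - int t' - int s + int t))
            * root_unity_int N (int b * (int u' - int v' - int u + int v)))"
proof -
  have "cnj (row_quotient M N Q (s, u) (t, v) (j, b)) * row_quotient M N Q (s', u') (t', v') (j, b)
      = (Q (t, b) * Q (s', b)) * (cnj (Q (s, b)) * cnj (Q (t', b)))
        * ((root_unity_int M (- (int j * (int s - int t))) * root_unity_int M (int j * (int s' - int t')))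
           * (root_unity_int N (- (int b * (int u - int v))) * root_unity_int N (int b * (int u' - int v'))))"
    unfolding row_quotient_on_torus[where Q = Q and t = t and b = b, OF assms(1)]
      row_quotient_on_torus[where Q = Q and t = t' and b = b, OF assms(2)]
    by (simp add: cnj_root_unity_int mult_ac)
  then show ?thesis
    unfolding root_unity_int_add by (simp add: algebra_simps)
qed

definition incr_diff :: "nat \<Rightarrow> (nat \<Rightarrow> nat) \<Rightarrow> (nat \<Rightarrow> nat) \<Rightarrow> nat \<Rightarrow> int" where
  "incr_diff p s t k = int (s ((k+1) mod p)) - int (t ((k+1) mod p)) - int (s k) + int (t k)"

text \<open>
  On the torus the \<open>k\<close>-th factor of \<open>trace_term\<close> is \<open>Q(t\<^sub>k, b\<^sub>k) Q(s\<^sub>k\<^sub>+\<^sub>1, b\<^sub>k)\<close>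
  times the conjugates of \<open>Q(s\<^sub>k, b\<^sub>k)\<close> and \<open>Q(t\<^sub>k\<^sub>+\<^sub>1, b\<^sub>k)\<close> times a root of unity;
  the two multisets collect these arguments.
\<close>

definition Q_exponents :: "nat \<Rightarrow> (nat \<Rightarrow> nat) \<Rightarrow> (nat \<Rightarrow> nat) \<Rightarrow> (nat \<Rightarrow> nat) \<Rightarrow> (nat \<times> nat) multiset" where
  "Q_exponents p s t b =
     image_mset (\<lambda>k. (t k, b k)) (mset [0..<p]) + image_mset (\<lambda>k. (s ((k+1) mod p), b k)) (mset [0..<p])"

definition cnjQ_exponents :: "nat \<Rightarrow> (nat \<Rightarrow> nat) \<Rightarrow> (nat \<Rightarrow> nat) \<Rightarrow> (nat \<Rightarrow> nat) \<Rightarrow> (nat \<times> nat) multiset" where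
  "cnjQ_exponents p s t b =
     image_mset (\<lambda>k. (s k, b k)) (mset [0..<p]) + image_mset (\<lambda>k. (t ((k+1) mod p), b k)) (mset [0..<p])"

definition balanced :: "nat \<Rightarrow> (nat \<Rightarrow> nat) \<Rightarrow> (nat \<Rightarrow> nat) \<Rightarrow> (nat \<Rightarrow> nat) \<Rightarrow> bool" where
  "balanced p s t b \<longleftrightarrow> Q_exponents p s t b = cnjQ_exponents p s t b"

definition phase ::
  "nat \<Rightarrow> nat \<Rightarrow> nat \<Rightarrow> (nat \<Rightarrow> nat \<times> nat) \<Rightarrow> (nat \<Rightarrow> nat \<times> nat) \<Rightarrow> (nat \<Rightarrow> nat \<times> nat) \<Rightarrow> complex" where
  "phase M N p \<alpha> \<beta> \<gamma> =
     (\<Prod>k<p. root_unity_int M (int (fst (\<gamma> k)) * incr_diff p (fst \<circ> \<alpha>) (fst \<circ> \<beta>) k)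
           * root_unity_int N (int (snd (\<gamma> k)) * incr_diff p (snd \<circ> \<alpha>) (snd \<circ> \<beta>) k))"

lemma trace_term_on_torus:
  assumes Q: "\<forall>q\<in>idx M N. norm (Q q) = 1" and p: "0 < p"
    and \<alpha>: "\<alpha> \<in> idxp M N p" and \<beta>: "\<beta> \<in> idxp M N p" and \<gamma>: "\<gamma> \<in> idxp M N p"
  shows "trace_term M N p Q \<alpha> \<beta> \<gamma>
       = phase M N p \<alpha> \<beta> \<gamma> * (\<Prod>q\<in>idx M N. Q q ^ count (Q_exponents p (fst \<circ> \<alpha>) (fst \<circ> \<beta>) (snd \<circ> \<gamma>)) q
                                      * cnj (Q q) ^ count (cnjQ_exponents p (fst \<circ> \<alpha>) (fst \<circ> \<beta>) (snd \<circ> \<gamma>)) q)"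
proof -
  let ?s = "fst \<circ> \<alpha>" and ?t = "fst \<circ> \<beta>" and ?b = "snd \<circ> \<gamma>" and ?k' = "\<lambda>k. (k+1) mod p"
  have mem: "\<alpha> k \<in> idx M N" "\<beta> k \<in> idx M N" "\<gamma> k \<in> idx M N" if "k < p" for k
    using that \<alpha> \<beta> \<gamma> by (auto simp: idxp_def)
  have "cnj (row_quotient M N Q (\<alpha> k) (\<beta> k) (\<gamma> k)) * row_quotient M N Q (\<alpha> (?k' k)) (\<beta> (?k' k)) (\<gamma> k)
      = (Q (?t k, ?b k) * Q (?s (?k' k), ?b k)) * (cnj (Q (?s k, ?b k)) * cnj (Q (?t (?k' k), ?b k)))
        * (root_unity_int M (int (fst (\<gamma> k)) * incr_diff p ?s ?t k)
           * root_unity_int N (int (snd (\<gamma> k)) * incr_diff p (snd \<circ> \<alpha>) (snd \<circ> \<beta>) k))"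
    if k: "k < p" for k
  proof -
    have "norm (Q (?t k, ?b k)) = 1" "norm (Q (?t (?k' k), ?b k)) = 1"
      using Q mem[OF k] mem[of "?k' k"] p by (auto simp: idx_def mem_Times_iff)
    then show ?thesis
      using trace_factor_on_torus[of Q "?t k" "?b k" "?t (?k' k)" M N "?s k" "snd (\<alpha> k)" "snd (\<beta> k)"
          "fst (\<gamma> k)" "?s (?k' k)" "snd (\<alpha> (?k' k))" "snd (\<beta> (?k' k))"]
      by (simp add: incr_diff_def)
  qed
  then have "trace_term M N p Q \<alpha> \<beta> \<gamma>
      = (\<Prod>k<p. Q (?t k, ?b k) * Q (?s (?k' k), ?b k))
        * (\<Prod>k<p. cnj (Q (?s k, ?b k)) * cnj (Q (?t (?k' k), ?b k))) * phase M N p \<alpha> \<beta> \<gamma>"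
    by (simp add: trace_term_def phase_def prod.distrib[symmetric])
  also have "(\<Prod>k<p. Q (?t k, ?b k) * Q (?s (?k' k), ?b k)) = prod_mset (image_mset Q (Q_exponents p ?s ?t ?b))"
    unfolding Q_exponents_def image_mset_union prod_mset.union prod_mset_image_upt by (rule prod.distrib)
  also have "\<dots> = (\<Prod>q\<in>idx M N. Q q ^ count (Q_exponents p ?s ?t ?b) q)"
    using mem p by (intro prod_mset_image_eq_prod_count) (auto simp: Q_exponents_def idx_def mem_Times_iff)
  also have "(\<Prod>k<p. cnj (Q (?s k, ?b k)) * cnj (Q (?t (?k' k), ?b k)))
      = prod_mset (image_mset (\<lambda>q. cnj (Q q)) (cnjQ_exponents p ?s ?t ?b))"
    unfolding cnjQ_exponents_def image_mset_union prod_mset.union prod_mset_image_upt by (rule prod.distrib)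
  also have "\<dots> = (\<Prod>q\<in>idx M N. cnj (Q q) ^ count (cnjQ_exponents p ?s ?t ?b) q)"
    using mem p by (intro prod_mset_image_eq_prod_count) (auto simp: cnjQ_exponents_def idx_def mem_Times_iff)
  finally show ?thesis
    by (simp only: prod.distrib mult_ac)
qed

lemma borel_measurable_row_quotient:
  assumes "\<alpha> \<in> idx M N" "\<beta> \<in> idx M N" "\<gamma> \<in> idx M N"
  shows "(\<lambda>Q. row_quotient M N Q \<alpha> \<beta> \<gamma>) \<in> borel_measurable (torus_haar M N)"
proof -
  obtain s u t v j b where e: "\<alpha> = (s, u)" "\<beta> = (t, v)" "\<gamma> = (j, b)"
    by (cases \<alpha>, cases \<beta>, cases \<gamma>) auto
  have "(s, b) \<in> idx M N" "(t, b) \<in> idx M N"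
    using assms e by (auto simp: idx_def)
  then show ?thesis
    unfolding e row_quotient_def Hmat_eq
    by (intro borel_measurable_divide borel_measurable_times borel_measurable_torus_component
        borel_measurable_const)
qed

lemma borel_measurable_trace_term:
  assumes "\<alpha> \<in> idxp M N p" "\<beta> \<in> idxp M N p" "\<gamma> \<in> idxp M N p"
  shows "(\<lambda>Q. trace_term M N p Q \<alpha> \<beta> \<gamma>) \<in> borel_measurable (torus_haar M N)"
proof -
  have "\<alpha> k \<in> idx M N \<and> \<beta> k \<in> idx M N \<and> \<gamma> k \<in> idx M N" if "k < p" for k
    using that assms by (auto simp: idxp_def)
  moreover have "(k+1) mod p < p" if "k < p" for k
    using that by simp
  ultimately show ?thesis
    unfolding trace_term_def
    by (intro borel_measurable_prod borel_measurable_times borel_measurable_cnj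
        borel_measurable_row_quotient) auto
qed

lemma Tmat_eq_sum_phase:
  assumes \<alpha>: "\<alpha> \<in> idxp M N p" and \<beta>: "\<beta> \<in> idxp M N p" and p: "0 < p"
  shows "Tmat M N p \<alpha> \<beta>
       = (\<Sum>\<gamma>\<in>idxp M N p. phase M N p \<alpha> \<beta> \<gamma> * of_bool (balanced p (fst \<circ> \<alpha>) (fst \<circ> \<beta>) (snd \<circ> \<gamma>)))
         / of_nat (M * N) ^ (p + 1)"
proof -
  let ?K = "of_nat (M * N) ^ (p + 1) :: complex"
  let ?Qe = "\<lambda>\<gamma>. Q_exponents p (fst \<circ> \<alpha>) (fst \<circ> \<beta>) (snd \<circ> \<gamma>)"
  let ?cQe = "\<lambda>\<gamma>. cnjQ_exponents p (fst \<circ> \<alpha>) (fst \<circ> \<beta>) (snd \<circ> \<gamma>)"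
  let ?mono = "\<lambda>\<gamma> Q. \<Prod>q\<in>idx M N. Q q ^ count (?Qe \<gamma>) q * cnj (Q q) ^ count (?cQe \<gamma>) q"
  have "Tmat M N p \<alpha> \<beta> = integral\<^sup>L (torus_haar M N) (\<lambda>Q. (\<Sum>\<gamma>\<in>idxp M N p. trace_term M N p Q \<alpha> \<beta> \<gamma>) / ?K)"
    unfolding Tmat_def by (intro Bochner_Integration.integral_cong refl mtrace_Umat_product p)
  also have "\<dots> = integral\<^sup>L (torus_haar M N) (\<lambda>Q. (\<Sum>\<gamma>\<in>idxp M N p. phase M N p \<alpha> \<beta> \<gamma> * ?mono \<gamma> Q) / ?K)"
  proof (rule integral_cong_AE)
    show "AE Q in torus_haar M N. (\<Sum>\<gamma>\<in>idxp M N p. trace_term M N p Q \<alpha> \<beta> \<gamma>) / ?K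
                               = (\<Sum>\<gamma>\<in>idxp M N p. phase M N p \<alpha> \<beta> \<gamma> * ?mono \<gamma> Q) / ?K"
      using AE_torus_haar_norm[of M N] by eventually_elim (simp add: trace_term_on_torus p \<alpha> \<beta>)
    show "(\<lambda>Q. (\<Sum>\<gamma>\<in>idxp M N p. trace_term M N p Q \<alpha> \<beta> \<gamma>) / ?K) \<in> borel_measurable (torus_haar M N)"
      using \<alpha> \<beta> by (intro borel_measurable_divide borel_measurable_sum borel_measurable_trace_term) auto
    show "(\<lambda>Q. (\<Sum>\<gamma>\<in>idxp M N p. phase M N p \<alpha> \<beta> \<gamma> * ?mono \<gamma> Q) / ?K) \<in> borel_measurable (torus_haar M N)"
      by (intro borel_measurable_divide borel_measurable_sum borel_measurable_prod borel_measurable_times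
          borel_measurable_power borel_measurable_cnj borel_measurable_torus_component) auto
  qed
  also have "\<dots> = (\<Sum>\<gamma>\<in>idxp M N p. phase M N p \<alpha> \<beta> \<gamma> * integral\<^sup>L (torus_haar M N) (?mono \<gamma>)) / ?K"
    by (simp add: integrable_torus_haar_monomial)
  also have "\<dots> = (\<Sum>\<gamma>\<in>idxp M N p. phase M N p \<alpha> \<beta> \<gamma> * of_bool (balanced p (fst \<circ> \<alpha>) (fst \<circ> \<beta>) (snd \<circ> \<gamma>))) / ?K"
  proof (intro arg_cong2[where f = "(/)"] sum.cong refl arg_cong2[where f = "(*)"])
    fix \<gamma> assume \<gamma>: "\<gamma> \<in> idxp M N p"
    have "\<alpha> k \<in> idx M N \<and> \<beta> k \<in> idx M N \<and> \<gamma> k \<in> idx M N" if "k < p" for k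
      using that \<alpha> \<beta> \<gamma> by (auto simp: idxp_def)
    moreover have "(k+1) mod p < p" for k
      using p by simp
    ultimately have "set_mset (?Qe \<gamma>) \<subseteq> idx M N" "set_mset (?cQe \<gamma>) \<subseteq> idx M N"
      by (auto simp: Q_exponents_def cnjQ_exponents_def idx_def mem_Times_iff)
    then show "integral\<^sup>L (torus_haar M N) (?mono \<gamma>) = of_bool (balanced p (fst \<circ> \<alpha>) (fst \<circ> \<beta>) (snd \<circ> \<gamma>))"
      unfolding torus_haar_moment balanced_def by (simp add: count_eq_on_iff_eq)
  qed
  finally show ?thesis .
qed

lemma balanced_cong:
  assumes "\<And>k. k < p \<Longrightarrow> s k = s' k" "\<And>k. k < p \<Longrightarrow> t k = t' k" "\<And>k. k < p \<Longrightarrow> b k = b' k"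
  shows "balanced p s t b \<longleftrightarrow> balanced p s' t' b'"
proof -
  have "(k+1) mod p < p" if "k < p" for k
    using that by simp
  then have "Q_exponents p s t b = Q_exponents p s' t' b'" "cnjQ_exponents p s t b = cnjQ_exponents p s' t' b'"
    unfolding Q_exponents_def cnjQ_exponents_def
    using assms by (auto intro!: arg_cong2[where f = "(+)"] image_mset_cong)
  then show ?thesis
    by (simp add: balanced_def)
qed

definition Tentry :: "nat \<Rightarrow> nat \<Rightarrow> nat \<Rightarrow> (nat \<Rightarrow> nat) \<Rightarrow> (nat \<Rightarrow> nat) \<Rightarrow> (nat \<Rightarrow> nat) \<Rightarrow> (nat \<Rightarrow> nat) \<Rightarrow> complex" where
  "Tentry M N p s u t v =
     of_nat M ^ p * of_bool (\<forall>k<p. int M dvd incr_diff p s t k) *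
     (\<Sum>b\<in>PiE {0..<p} (\<lambda>_. {0..<N}).
        (\<Prod>k<p. root_unity_int N (int (b k) * incr_diff p u v k)) * of_bool (balanced p s t b))
     / of_nat (M * N) ^ (p + 1)"

lemma Tmat_eq_Tentry:
  assumes \<alpha>: "\<alpha> \<in> idxp M N p" and \<beta>: "\<beta> \<in> idxp M N p" and p: "0 < p" and M: "0 < M"
  shows "Tmat M N p \<alpha> \<beta> = Tentry M N p (\<lambda>k\<in>{0..<p}. fst (\<alpha> k)) (\<lambda>k\<in>{0..<p}. snd (\<alpha> k))
                                         (\<lambda>k\<in>{0..<p}. fst (\<beta> k)) (\<lambda>k\<in>{0..<p}. snd (\<beta> k))"
proof -
  define s where "s = (\<lambda>k\<in>{0..<p}. fst (\<alpha> k))"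
  define u where "u = (\<lambda>k\<in>{0..<p}. snd (\<alpha> k))"
  define t where "t = (\<lambda>k\<in>{0..<p}. fst (\<beta> k))"
  define v where "v = (\<lambda>k\<in>{0..<p}. snd (\<beta> k))"
  have "(k+1) mod p < p" if "k < p" for k
    using that by simp
  then have incr_M: "incr_diff p (fst \<circ> \<alpha>) (fst \<circ> \<beta>) k = incr_diff p s t k"
        and incr_N: "incr_diff p (snd \<circ> \<alpha>) (snd \<circ> \<beta>) k = incr_diff p u v k" if "k < p" for k
    using that by (simp_all add: incr_diff_def s_def t_def u_def v_def)
  let ?X = "\<lambda>j. \<Prod>k<p. root_unity_int M (int (j k) * incr_diff p s t k)"
  let ?Y = "\<lambda>b. (\<Prod>k<p. root_unity_int N (int (b k) * incr_diff p u v k)) * of_bool (balanced p s t b)"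
  have "Tmat M N p \<alpha> \<beta>
      = (\<Sum>j\<in>PiE {0..<p} (\<lambda>_. {0..<M}). \<Sum>b\<in>PiE {0..<p} (\<lambda>_. {0..<N}). ?X j * ?Y b) / of_nat (M * N) ^ (p + 1)"
    unfolding Tmat_eq_sum_phase[OF \<alpha> \<beta> p] idxp_def idx_def sum_PiE_Times
  proof (intro arg_cong2[where f = "(/)"] refl sum.cong)
    fix j b :: "nat \<Rightarrow> nat"
    let ?\<gamma> = "\<lambda>i\<in>{0..<p}. (j i, b i)"
    have "phase M N p \<alpha> \<beta> ?\<gamma> = ?X j * (\<Prod>k<p. root_unity_int N (int (b k) * incr_diff p u v k))"
      unfolding phase_def prod.distrib[symmetric] by (intro prod.cong refl) (simp add: incr_M incr_N)
    moreover have "balanced p (fst \<circ> \<alpha>) (fst \<circ> \<beta>) (snd \<circ> ?\<gamma>) \<longleftrightarrow> balanced p s t b"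
      by (rule balanced_cong) (simp_all add: s_def t_def)
    ultimately show "phase M N p \<alpha> \<beta> ?\<gamma> * of_bool (balanced p (fst \<circ> \<alpha>) (fst \<circ> \<beta>) (snd \<circ> ?\<gamma>)) = ?X j * ?Y b"
      by simp
  qed
  also have "\<dots> = (\<Sum>j\<in>PiE {0..<p} (\<lambda>_. {0..<M}). ?X j) * (\<Sum>b\<in>PiE {0..<p} (\<lambda>_. {0..<N}). ?Y b)
                  / of_nat (M * N) ^ (p + 1)"
    by (simp add: sum_product)
  also have "(\<Sum>j\<in>PiE {0..<p} (\<lambda>_. {0..<M}). ?X j) = of_nat M ^ p * of_bool (\<forall>k<p. int M dvd incr_diff p s t k)"
    using sum_PiE_prod_root_unity_int[of "{0..<p}" M "incr_diff p s t"] M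
    by (auto simp: atLeast0LessThan)
  finally show ?thesis
    unfolding Tentry_def s_def u_def t_def v_def .
qed

section \<open>Summation over closed walks\<close>

lemma sum_incr_diff_by_parts:
  fixes B U :: "nat \<Rightarrow> nat \<Rightarrow> nat"
  assumes r: "0 < r" and p: "0 < p"
  shows "(\<Sum>x<r. \<Sum>k<p. int (B x k) * incr_diff p (U x) (U ((x+1) mod r)) k)
       = (\<Sum>x<r. \<Sum>k<p. int (U x k) * incr_diff p (B ((x+r-1) mod r)) (B x) ((k+p-1) mod p))"
proof -
  define D where "D x k = int (U x k) - int (U ((x+1) mod r) k)" for x k
  define E where "E x k = int (B x ((k+p-1) mod p)) - int (B x k)" for x k
  have "(\<Sum>x<r. \<Sum>k<p. int (B x k) * incr_diff p (U x) (U ((x+1) mod r)) k)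
      = (\<Sum>x<r. \<Sum>k<p. int (B x k) * (D x ((k+1) mod p) - D x k))"
    by (simp add: incr_diff_def D_def algebra_simps)
  also have "\<dots> = (\<Sum>k<p. \<Sum>x<r. D x k * E x k)"
  proof -
    have "(\<Sum>k<p. int (B x k) * (D x ((k+1) mod p) - D x k)) = (\<Sum>k<p. D x k * E x k)" for x
      using sum_by_parts_cyclic[OF p, of "\<lambda>k. int (B x k)" "D x"] by (simp add: E_def)
    then show ?thesis
      by (simp add: sum.swap[of _ "{..<r}"])
  qed
  also have "\<dots> = (\<Sum>k<p. \<Sum>x<r. E x k * - (int (U ((x+1) mod r) k) - int (U x k)))"
    by (simp add: D_def algebra_simps)
  also have "\<dots> = (\<Sum>k<p. \<Sum>x<r. int (U x k) * (E x k - E ((x+r-1) mod r) k))"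
  proof -
    have "(\<Sum>x<r. E x k * - (int (U ((x+1) mod r) k) - int (U x k)))
        = (\<Sum>x<r. int (U x k) * (E x k - E ((x+r-1) mod r) k))" for k
      using sum_by_parts_cyclic[OF r, of "\<lambda>x. E x k" "\<lambda>x. int (U x k)"]
      by (simp add: algebra_simps sum_subtractf)
    then show ?thesis
      by simp
  qed
  also have "\<dots> = (\<Sum>x<r. \<Sum>k<p. int (U x k) * incr_diff p (B ((x+r-1) mod r)) (B x) ((k+p-1) mod p))"
    using mod_Suc_pred[of _ p] by (subst sum.swap) (simp add: E_def incr_diff_def algebra_simps)
  finally show ?thesis .
qed

text \<open>
  Cyclic second differences vanishing mod \<open>n\<close>: equivalently \<open>S x k \<equiv> i x + a k (mod n)\<close> for
  some \<open>i\<close> and \<open>a\<close>, see \<open>bij_betw_sum_table\<close>.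
\<close>

definition additive_mod :: "nat \<Rightarrow> nat \<Rightarrow> nat \<Rightarrow> (nat \<Rightarrow> nat \<Rightarrow> nat) \<Rightarrow> bool" where
  "additive_mod n r p S \<longleftrightarrow> (\<forall>x<r. \<forall>k<p. int n dvd incr_diff p (S x) (S ((x+1) mod r)) k)"

lemma additive_mod_iff_shifted:
  assumes r: "0 < r" and p: "0 < p"
  shows "additive_mod N r p B
     \<longleftrightarrow> (\<forall>x<r. \<forall>k<p. int N dvd incr_diff p (B ((x+r-1) mod r)) (B x) ((k+p-1) mod p))"
proof
  assume B: "additive_mod N r p B"
  show "\<forall>x<r. \<forall>k<p. int N dvd incr_diff p (B ((x+r-1) mod r)) (B x) ((k+p-1) mod p)"
  proof (intro allI impI)
    fix x k assume "x < r" "k < p"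
    then have "incr_diff p (B ((x+r-1) mod r)) (B x) ((k+p-1) mod p)
             = incr_diff p (B ((x+r-1) mod r)) (B (((x+r-1) mod r + 1) mod r)) ((k+p-1) mod p)"
      using mod_Suc_pred[of x r] by simp
    then show "int N dvd incr_diff p (B ((x+r-1) mod r)) (B x) ((k+p-1) mod p)"
      using B r p by (simp add: additive_mod_def)
  qed
next
  assume shifted: "\<forall>x<r. \<forall>k<p. int N dvd incr_diff p (B ((x+r-1) mod r)) (B x) ((k+p-1) mod p)"
  show "additive_mod N r p B"
    unfolding additive_mod_def
  proof (intro allI impI)
    fix x k assume "x < r" "k < p"
    then have "incr_diff p (B (((x+1) mod r + r - 1) mod r)) (B ((x+1) mod r)) (((k+1) mod p + p - 1) mod p)
             = incr_diff p (B x) (B ((x+1) mod r)) k"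
      using mod_pred_Suc[of x r] mod_pred_Suc[of k p] by simp
    then show "int N dvd incr_diff p (B x) (B ((x+1) mod r)) k"
      using shifted r p by (metis mod_less_divisor)
  qed
qed

lemma sum_tables_root_unity_incr_diff:
  fixes B :: "nat \<Rightarrow> nat \<Rightarrow> nat"
  assumes r: "0 < r" and p: "0 < p" and N: "0 < N"
  shows "(\<Sum>U\<in>PiE {0..<r} (\<lambda>_. PiE {0..<p} (\<lambda>_. {0..<N})).
            \<Prod>x<r. \<Prod>k<p. root_unity_int N (int (B x k) * incr_diff p (U x) (U ((x+1) mod r)) k))
       = of_nat N ^ (r * p) * of_bool (additive_mod N r p B)"
proof -
  define G where "G x k = incr_diff p (B ((x+r-1) mod r)) (B x) ((k+p-1) mod p)" for x k
  have "(\<Prod>x<r. \<Prod>k<p. root_unity_int N (int (B x k) * incr_diff p (U x) (U ((x+1) mod r)) k))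
      = (\<Prod>x<r. \<Prod>k<p. root_unity_int N (int (U x k) * G x k))" for U
    unfolding prod_root_unity_int[OF finite_lessThan] G_def sum_incr_diff_by_parts[OF r p] ..
  then have "(\<Sum>U\<in>PiE {0..<r} (\<lambda>_. PiE {0..<p} (\<lambda>_. {0..<N})).
                \<Prod>x<r. \<Prod>k<p. root_unity_int N (int (B x k) * incr_diff p (U x) (U ((x+1) mod r)) k))
      = (\<Prod>x\<in>{0..<r}. \<Sum>V\<in>PiE {0..<p} (\<lambda>_. {0..<N}). \<Prod>k\<in>{0..<p}. root_unity_int N (int (V k) * G x k))"
    by (simp add: prod_sum_PiE finite_PiE atLeast0LessThan)
  also have "\<dots> = (\<Prod>x\<in>{0..<r}. of_nat N ^ p * of_bool (\<forall>k<p. int N dvd G x k))"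
  proof (rule prod.cong[OF refl])
    fix x
    show "(\<Sum>V\<in>PiE {0..<p} (\<lambda>_. {0..<N}). \<Prod>k\<in>{0..<p}. root_unity_int N (int (V k) * G x k))
        = of_nat N ^ p * of_bool (\<forall>k<p. int N dvd G x k)"
      using sum_PiE_prod_root_unity_int[of "{0..<p}" N "G x"] N by (auto simp: atLeast0LessThan)
  qed
  also have "\<dots> = of_nat N ^ (r * p) * of_bool (\<forall>x<r. \<forall>k<p. int N dvd G x k)"
    by (auto simp: prod.distrib prod_of_bool atLeast0LessThan mult.commute simp flip: power_mult)
  finally show ?thesis
    unfolding G_def additive_mod_iff_shifted[OF r p] .
qed

lemma cpr_eq_sum_Tentry:
  assumes M: "0 < M" and p: "0 < p" and r: "0 < r"
  shows "cpr M N p r =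
    (\<Sum>S\<in>PiE {0..<r} (\<lambda>_. PiE {0..<p} (\<lambda>_. {0..<M})). \<Sum>U\<in>PiE {0..<r} (\<lambda>_. PiE {0..<p} (\<lambda>_. {0..<N})).
       \<Prod>x<r. Tentry M N p (S x) (U x) (S ((x+1) mod r)) (U ((x+1) mod r)))"
proof -
  let ?fstp = "\<lambda>\<alpha>. \<lambda>k\<in>{0..<p}. fst (\<alpha> k)" and ?sndp = "\<lambda>\<alpha>. \<lambda>k\<in>{0..<p}. snd (\<alpha> k)"
  have "cpr M N p r = (\<Sum>A\<in>PiE {0..<r} (\<lambda>_. idxp M N p). \<Prod>x<r. Tmat M N p (A x) (A ((x+1) mod r)))"
    unfolding cpr_def by (rule mtrace_mpow_eq_sum_cycles[OF _ r]) (simp add: idxp_def finite_PiE)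
  also have "\<dots> = (\<Sum>A\<in>PiE {0..<r} (\<lambda>_. idxp M N p). \<Prod>x<r.
      Tentry M N p (?fstp (A x)) (?sndp (A x)) (?fstp (A ((x+1) mod r))) (?sndp (A ((x+1) mod r))))"
    using r by (intro sum.cong refl prod.cong Tmat_eq_Tentry p M) auto
  also have "\<dots> = (\<Sum>S\<in>PiE {0..<r} (\<lambda>_. PiE {0..<p} (\<lambda>_. {0..<M})).
                   \<Sum>U\<in>PiE {0..<r} (\<lambda>_. PiE {0..<p} (\<lambda>_. {0..<N})).
                     \<Prod>x<r. Tentry M N p (S x) (U x) (S ((x+1) mod r)) (U ((x+1) mod r)))"
    unfolding idxp_def idx_def sum_PiE_PiE_Times
  proof (intro sum.cong refl prod.cong)
    fix S U x
    assume S: "S \<in> PiE {0..<r} (\<lambda>_. PiE {0..<p} (\<lambda>_. {0..<M}))"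
       and U: "U \<in> PiE {0..<r} (\<lambda>_. PiE {0..<p} (\<lambda>_. {0..<N}))" and "x \<in> {..<r}"
    let ?A = "\<lambda>x\<in>{0..<r}. \<lambda>k\<in>{0..<p}. (S x k, U x k)"
    have "?fstp (?A y) = S y" "?sndp (?A y) = U y" if "y < r" for y
      using that PiE_arb[OF PiE_mem[OF S], of y] PiE_arb[OF PiE_mem[OF U], of y] by (auto simp: fun_eq_iff)
    then show "Tentry M N p (?fstp (?A x)) (?sndp (?A x)) (?fstp (?A ((x+1) mod r))) (?sndp (?A ((x+1) mod r)))
             = Tentry M N p (S x) (U x) (S ((x+1) mod r)) (U ((x+1) mod r))"
      using \<open>x \<in> {..<r}\<close> r by simp
  qed
  finally show ?thesis .
qed

definition balanced_cycle :: "nat \<Rightarrow> nat \<Rightarrow> (nat \<Rightarrow> nat \<Rightarrow> nat) \<Rightarrow> (nat \<Rightarrow> nat \<Rightarrow> nat) \<Rightarrow> bool" where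
  "balanced_cycle r p S B \<longleftrightarrow> (\<forall>x<r. balanced p (S x) (S ((x+1) mod r)) (B x))"

lemma prod_Tentry_eq:
  "(\<Prod>x<r. Tentry M N p (S x) (U x) (S ((x+1) mod r)) (U ((x+1) mod r)))
 = of_nat M ^ (p * r) * of_bool (additive_mod M r p S) / of_nat (M * N) ^ ((p + 1) * r) *
   (\<Sum>B\<in>PiE {0..<r} (\<lambda>_. PiE {0..<p} (\<lambda>_. {0..<N})).
      (\<Prod>x<r. \<Prod>k<p. root_unity_int N (int (B x k) * incr_diff p (U x) (U ((x+1) mod r)) k))
      * of_bool (balanced_cycle r p S B))"
proof -
  let ?Y = "\<lambda>x b. (\<Prod>k<p. root_unity_int N (int (b k) * incr_diff p (U x) (U ((x+1) mod r)) k))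
                   * of_bool (balanced p (S x) (S ((x+1) mod r)) b)"
  have "(\<Prod>x<r. Tentry M N p (S x) (U x) (S ((x+1) mod r)) (U ((x+1) mod r)))
      = (\<Prod>x<r. of_nat M ^ p * of_bool (\<forall>k<p. int M dvd incr_diff p (S x) (S ((x+1) mod r)) k))
        * (\<Prod>x<r. \<Sum>b\<in>PiE {0..<p} (\<lambda>_. {0..<N}). ?Y x b) / of_nat (M * N) ^ ((p + 1) * r)"
    by (simp only: Tentry_def prod_dividef prod.distrib prod_constant card_lessThan power_mult[symmetric])
  also have "(\<Prod>x<r. of_nat M ^ p * of_bool (\<forall>k<p. int M dvd incr_diff p (S x) (S ((x+1) mod r)) k))
           = (of_nat M ^ (p * r) * of_bool (additive_mod M r p S) :: complex)"
    by (auto simp: prod.distrib prod_of_bool additive_mod_def power_mult)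
  also have "(\<Prod>x<r. \<Sum>b\<in>PiE {0..<p} (\<lambda>_. {0..<N}). ?Y x b)
           = (\<Sum>B\<in>PiE {0..<r} (\<lambda>_. PiE {0..<p} (\<lambda>_. {0..<N})). \<Prod>x<r. ?Y x (B x))"
    unfolding atLeast0LessThan by (rule prod_sum_PiE) (auto intro: finite_PiE)
  finally show ?thesis
    by (simp add: prod.distrib prod_of_bool balanced_cycle_def Ball_def mult_ac)
qed

lemma sum_prod_Tentry:
  assumes p: "0 < p" and r: "0 < r" and N: "0 < N"
  shows "(\<Sum>U\<in>PiE {0..<r} (\<lambda>_. PiE {0..<p} (\<lambda>_. {0..<N})).
            \<Prod>x<r. Tentry M N p (S x) (U x) (S ((x+1) mod r)) (U ((x+1) mod r)))
       = of_nat M ^ (p * r) * of_nat N ^ (r * p) / of_nat (M * N) ^ ((p + 1) * r) *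
         (\<Sum>B\<in>PiE {0..<r} (\<lambda>_. PiE {0..<p} (\<lambda>_. {0..<N})).
            of_bool (additive_mod M r p S \<and> additive_mod N r p B \<and> balanced_cycle r p S B))"
proof -
  let ?tables = "PiE {0..<r} (\<lambda>_. PiE {0..<p} (\<lambda>_. {0..<N}))"
  let ?c = "of_nat M ^ (p * r) * of_bool (additive_mod M r p S) / of_nat (M * N) ^ ((p + 1) * r) :: complex"
  let ?\<Phi> = "\<lambda>U B. \<Prod>x<r. \<Prod>k<p. root_unity_int N (int (B x k) * incr_diff p (U x) (U ((x+1) mod r)) k)"
  have "(\<Sum>U\<in>?tables. \<Prod>x<r. Tentry M N p (S x) (U x) (S ((x+1) mod r)) (U ((x+1) mod r)))
      = ?c * (\<Sum>U\<in>?tables. \<Sum>B\<in>?tables. ?\<Phi> U B * of_bool (balanced_cycle r p S B))"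
    unfolding prod_Tentry_eq by (simp only: sum_distrib_left)
  also have "\<dots> = ?c * (\<Sum>B\<in>?tables. of_bool (balanced_cycle r p S B) * (\<Sum>U\<in>?tables. ?\<Phi> U B))"
    by (subst sum.swap) (simp add: sum_distrib_left mult.commute)
  also have "\<dots> = ?c * (\<Sum>B\<in>?tables. of_bool (balanced_cycle r p S B) * (of_nat N ^ (r * p) * of_bool (additive_mod N r p B)))"
    by (simp only: sum_tables_root_unity_incr_diff[OF r p N])
  finally show ?thesis
    by (simp add: sum_distrib_left of_bool_conj mult_ac)
qed

section \<open>Additive tables\<close>

definition sum_table :: "nat \<Rightarrow> nat \<Rightarrow> nat \<Rightarrow> (nat \<Rightarrow> nat) \<Rightarrow> (nat \<Rightarrow> nat) \<Rightarrow> nat \<Rightarrow> nat \<Rightarrow> nat" where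
  "sum_table n r p i a = (\<lambda>x\<in>{0..<r}. \<lambda>k\<in>{0..<p}. (i x + a k) mod n)"

lemma additive_mod_sum_table:
  assumes "0 < r" "0 < p"
  shows "additive_mod n r p (sum_table n r p i a)"
  unfolding additive_mod_def
proof (intro allI impI)
  fix x k assume x: "x < r" and k: "k < p"
  let ?x' = "(x+1) mod r" and ?k' = "(k+1) mod p"
  let ?D = "\<lambda>u. int (u mod n) - int u"
  have "?x' < r" "?k' < p" using assms by auto
  then have "incr_diff p (sum_table n r p i a x) (sum_table n r p i a ?x') k
           = ?D (i x + a ?k') - ?D (i ?x' + a ?k') - ?D (i x + a k) + ?D (i ?x' + a k)"
    using x k by (simp add: incr_diff_def sum_table_def)
  moreover have "int n dvd ?D (i x + a ?k') - ?D (i ?x' + a ?k') - ?D (i x + a k) + ?D (i ?x' + a k)"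
    by (intro dvd_add dvd_diff dvd_of_nat_mod_diff)
  ultimately show "int n dvd incr_diff p (sum_table n r p i a x) (sum_table n r p i a ?x') k"
    by simp
qed

text \<open>The increments telescope along each row and then along the first column.\<close>

lemma additive_mod_dvd_corner:
  assumes S: "additive_mod n r p S" and x: "x < r" and k: "k < p"
  shows "int n dvd int (S x k) - int (S x 0) - int (S 0 k) + int (S 0 0)"
proof -
  define e where "e x k = int (S x k) - int (S ((x+1) mod r) k)" for x k
  have row: "int n dvd e x k - e x 0" if "x < r" "k < p" for x k
    using that(2)
  proof (induction k)
    case 0
    then show ?case by simp
  next
    case (Suc k)
    have "e x (Suc k) - e x k = incr_diff p (S x) (S ((x+1) mod r)) k"
      using Suc.prems by (simp add: incr_diff_def e_def)
    then have "int n dvd e x (Suc k) - e x k"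
      using S that(1) Suc.prems by (simp add: additive_mod_def)
    with Suc show ?case
      using dvd_add[of "int n" "e x (Suc k) - e x k" "e x k - e x 0"] by simp
  qed
  have "int n dvd (int (S x k) - int (S 0 k)) - (int (S x 0) - int (S 0 0))"
    using x
  proof (induction x)
    case 0
    then show ?case by simp
  next
    case (Suc x)
    have "(int (S (Suc x) k) - int (S 0 k)) - (int (S (Suc x) 0) - int (S 0 0))
        = ((int (S x k) - int (S 0 k)) - (int (S x 0) - int (S 0 0))) - (e x k - e x 0)"
      using Suc.prems by (simp add: e_def)
    moreover have "int n dvd (int (S x k) - int (S 0 k)) - (int (S x 0) - int (S 0 0))"
      using Suc by simp
    moreover have "int n dvd e x k - e x 0"
      using row Suc.prems k by simp
    ultimately show ?case
      by (metis dvd_diff)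
  qed
  then show ?thesis
    by (simp add: algebra_simps)
qed

lemma sum_table_of_additive_mod:
  assumes S: "S \<in> PiE {0..<R} (\<lambda>_. PiE {0..<P} (\<lambda>_. {0..<n}))" and add: "additive_mod n R P S"
    and m: "m < n" and R: "0 < R" and P: "0 < P"
  shows "sum_table n R P (\<lambda>x\<in>{0..<R}. (S x 0 + (n - m)) mod n) (\<lambda>k\<in>{0..<P}. (S 0 k + (n - S 0 0) + m) mod n) = S"
proof (intro ext)
  fix x k
  have S_lt: "S x k < n" if "x < R" "k < P" for x k
    using PiE_mem[OF PiE_mem[OF S]] that by auto
  show "sum_table n R P (\<lambda>x\<in>{0..<R}. (S x 0 + (n - m)) mod n) (\<lambda>k\<in>{0..<P}. (S 0 k + (n - S 0 0) + m) mod n) x k = S x k"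
  proof (cases "x < R \<and> k < P")
    case True
    then have "x < R" "k < P" by auto
    have "((S x 0 + (n - m)) mod n + (S 0 k + (n - S 0 0) + m) mod n) mod n
        = (S x 0 + (n - m) + (S 0 k + (n - S 0 0) + m)) mod n"
      by (simp add: mod_add_eq)
    also have "\<dots> = S x k"
    proof (rule mod_eq_if_dvd_of_nat_diff)
      have diff: "int (S x 0 + (n - m) + (S 0 k + (n - S 0 0) + m)) - int (S x k)
          = 2 * int n - (int (S x k) - int (S x 0) - int (S 0 k) + int (S 0 0))"
        using m S_lt[OF R P] by (simp add: of_nat_diff)
      show "int n dvd int (S x 0 + (n - m) + (S 0 k + (n - S 0 0) + m)) - int (S x k)"
        unfolding diff
        by (rule dvd_diff) (simp_all add: additive_mod_dvd_corner[OF add \<open>x < R\<close> \<open>k < P\<close>])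
    qed (rule S_lt[OF \<open>x < R\<close> \<open>k < P\<close>])
    finally show ?thesis
      using True by (simp add: sum_table_def)
  next
    case False
    then show ?thesis
      using S PiE_arb[OF S, of x] PiE_arb[OF PiE_mem[OF S], of x k] by (auto simp: sum_table_def)
  qed
qed

lemma sum_table_components:
  assumes i: "i \<in> PiE {0..<R} (\<lambda>_. {0..<n})" and a: "a \<in> PiE {0..<P} (\<lambda>_. {0..<n})"
    and R: "0 < R" and P: "0 < P"
  shows "(\<lambda>x\<in>{0..<R}. (sum_table n R P i a x 0 + (n - a 0)) mod n) = i"
        "(\<lambda>k\<in>{0..<P}. (sum_table n R P i a 0 k + (n - sum_table n R P i a 0 0) + a 0) mod n) = a"
proof -
  have a0: "a 0 < n" and i0: "i 0 < n" using i a R P by auto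
  show "(\<lambda>x\<in>{0..<R}. (sum_table n R P i a x 0 + (n - a 0)) mod n) = i"
  proof (intro ext)
    fix x
    have "((i x + a 0) mod n + (n - a 0)) mod n = i x" if "x < R"
    proof -
      have "((i x + a 0) mod n + (n - a 0)) mod n = (i x + a 0 + (n - a 0)) mod n"
        by (rule mod_add_left_eq)
      also have "i x + a 0 + (n - a 0) = i x + n"
        using a0 by simp
      finally show ?thesis
        using PiE_mem[OF i] that by auto
    qed
    then show "(\<lambda>x\<in>{0..<R}. (sum_table n R P i a x 0 + (n - a 0)) mod n) x = i x"
      using PiE_arb[OF i, of x] P by (auto simp: sum_table_def)
  qed
  show "(\<lambda>k\<in>{0..<P}. (sum_table n R P i a 0 k + (n - sum_table n R P i a 0 0) + a 0) mod n) = a"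
  proof (intro ext)
    fix k
    let ?w = "(i 0 + a 0) mod n"
    have "((i 0 + a k) mod n + (n - ?w) + a 0) mod n = a k" if "k < P"
    proof (rule mod_eq_if_dvd_of_nat_diff)
      have "?w < n" using a0 by simp
      then have diff: "int ((i 0 + a k) mod n + (n - ?w) + a 0) - int (a k)
          = (int ((i 0 + a k) mod n) - int (i 0 + a k)) - (int ?w - int (i 0 + a 0)) + int n"
        by (simp add: of_nat_diff)
      show "int n dvd int ((i 0 + a k) mod n + (n - ?w) + a 0) - int (a k)"
        unfolding diff by (intro dvd_add dvd_diff dvd_of_nat_mod_diff dvd_refl)
    qed (use a that in auto)
    then show "(\<lambda>k\<in>{0..<P}. (sum_table n R P i a 0 k + (n - sum_table n R P i a 0 0) + a 0) mod n) k = a k"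
      using PiE_arb[OF a, of k] R P by (auto simp: sum_table_def)
  qed
qed

text \<open>The pairs \<open>(i + c, a - c)\<close> all give the same table; \<open>a 0\<close> records \<open>c\<close>.\<close>

lemma bij_betw_sum_table:
  assumes n: "0 < n" and R: "0 < R" and P: "0 < P"
  shows "bij_betw (\<lambda>(i, a). (a 0, sum_table n R P i a))
           (PiE {0..<R} (\<lambda>_. {0..<n}) \<times> PiE {0..<P} (\<lambda>_. {0..<n}))
           ({0..<n} \<times> {S\<in>PiE {0..<R} (\<lambda>_. PiE {0..<P} (\<lambda>_. {0..<n})). additive_mod n R P S})"
    (is "bij_betw ?join ?vectors ({0..<n} \<times> ?add)")
proof -
  define split where "split = (\<lambda>(m, S). (\<lambda>x\<in>{0..<R}. (S x 0 + (n - m)) mod n,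
                                         \<lambda>k\<in>{0..<P}. (S 0 k + (n - S 0 0) + m) mod n))"
  show ?thesis
  proof (rule bij_betw_byWitness[where f' = split])
    show "\<forall>q\<in>?vectors. split (?join q) = q"
      using sum_table_components[OF _ _ R P] by (auto simp: split_def)
    show "\<forall>q\<in>{0..<n} \<times> ?add. ?join (split q) = q"
    proof
      fix q assume "q \<in> {0..<n} \<times> ?add"
      then obtain m S where q: "q = (m, S)" and m: "m < n"
        and S: "S \<in> PiE {0..<R} (\<lambda>_. PiE {0..<P} (\<lambda>_. {0..<n}))" and add: "additive_mod n R P S"
        by auto
      have "S 0 0 < n"
        using PiE_mem[OF PiE_mem[OF S]] R P by auto
      then show "?join (split q) = q"
        using P m sum_table_of_additive_mod[OF S add m R P] by (simp add: split_def q)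
    qed
    show "?join ` ?vectors \<subseteq> {0..<n} \<times> ?add"
      using P n additive_mod_sum_table[OF R P] by (auto simp: sum_table_def)
    show "split ` ({0..<n} \<times> ?add) \<subseteq> ?vectors"
      using n by (auto simp: split_def)
  qed
qed

lemma sum_additive_mod_tables:
  fixes g :: "(nat \<Rightarrow> nat \<Rightarrow> nat) \<Rightarrow> complex"
  assumes n: "0 < n" and R: "0 < R" and P: "0 < P"
  shows "of_nat n * (\<Sum>S\<in>PiE {0..<R} (\<lambda>_. PiE {0..<P} (\<lambda>_. {0..<n})). of_bool (additive_mod n R P S) * g S)
       = (\<Sum>i\<in>PiE {0..<R} (\<lambda>_. {0..<n}). \<Sum>a\<in>PiE {0..<P} (\<lambda>_. {0..<n}). g (sum_table n R P i a))"
proof -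
  let ?add = "{S\<in>PiE {0..<R} (\<lambda>_. PiE {0..<P} (\<lambda>_. {0..<n})). additive_mod n R P S}"
  have "of_nat n * (\<Sum>S\<in>PiE {0..<R} (\<lambda>_. PiE {0..<P} (\<lambda>_. {0..<n})). of_bool (additive_mod n R P S) * g S)
      = (\<Sum>(m, S)\<in>{0..<n} \<times> ?add. g S)"
    by (simp add: sum.cartesian_product[symmetric] finite_PiE Int_def)
  also have "\<dots> = (\<Sum>(i, a)\<in>PiE {0..<R} (\<lambda>_. {0..<n}) \<times> PiE {0..<P} (\<lambda>_. {0..<n}). g (sum_table n R P i a))"
    by (subst sum.reindex_bij_betw[OF bij_betw_sum_table[OF n R P], symmetric]) (simp add: case_prod_beta)
  finally show ?thesis
    by (simp add: sum.cartesian_product)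
qed

section \<open>Invariance of the balance condition\<close>

lemma balanced_translate:
  assumes b: "\<forall>k<p. b k < N"
  shows "balanced p s t (\<lambda>k\<in>{0..<p}. (c + b k) mod N) \<longleftrightarrow> balanced p s t b"
proof -
  let ?\<tau> = "\<lambda>(m, y). (m :: nat, (c + y) mod N)"
  have inj: "inj_on ?\<tau> (UNIV \<times> {0..<N})"
  proof (rule inj_onI)
    fix q q' assume "q \<in> UNIV \<times> {0..<N}" "q' \<in> UNIV \<times> {0..<N}" "?\<tau> q = ?\<tau> q'"
    then obtain m y y' where q: "q = (m, y)" "q' = (m, y')"
      and y: "y < N" "y' < N" and eq: "(c + y) mod N = (c + y') mod N"
      by (cases q, cases q') auto
    have "int (c + y) mod int N = int (c + y') mod int N"
      using arg_cong[OF eq, of int] by (simp only: of_nat_mod)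
    then have "int N dvd int y - int y'"
      by (simp only: mod_eq_dvd_iff) simp
    then have "y mod N = y'"
      by (rule mod_eq_if_dvd_of_nat_diff[OF y(2)])
    then show "q = q'"
      using q y(1) by simp
  qed
  have "Q_exponents p s t (\<lambda>k\<in>{0..<p}. (c + b k) mod N) = image_mset ?\<tau> (Q_exponents p s t b)"
       "cnjQ_exponents p s t (\<lambda>k\<in>{0..<p}. (c + b k) mod N) = image_mset ?\<tau> (cnjQ_exponents p s t b)"
    unfolding Q_exponents_def cnjQ_exponents_def image_mset_union image_mset.compositionality
    by (auto intro!: arg_cong2[where f = "(+)"] image_mset_cong)
  moreover have "set_mset (Q_exponents p s t b) \<union> set_mset (cnjQ_exponents p s t b) \<subseteq> UNIV \<times> {0..<N}"
    using b by (auto simp: Q_exponents_def cnjQ_exponents_def)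
  ultimately show ?thesis
    unfolding balanced_def using image_mset_eq_iff_inj_on[OF inj_on_subset[OF inj]] by simp
qed

lemma balanced_cycle_sum_table:
  assumes "b \<in> PiE {0..<p} (\<lambda>_. {0..<N})"
  shows "balanced_cycle r p S (sum_table N r p c b) \<longleftrightarrow> balanced_cycle r p S (\<lambda>_. b)"
proof -
  have "sum_table N r p c b x = (\<lambda>k\<in>{0..<p}. (c x + b k) mod N)" if "x < r" for x
    using that by (simp add: sum_table_def)
  moreover have "\<forall>k<p. b k < N"
    using assms by auto
  ultimately show ?thesis
    by (auto simp: balanced_cycle_def balanced_translate)
qed

text \<open>
  \<open>balanced\<close> pairs \<open>b\<^sub>k\<close> with \<open>a\<^sub>k\<^sub>+\<^sub>1\<close> where \<open>(E\<^sub>x)\<close> pairs \<open>b\<^sub>y\<close> with \<open>a\<^sub>y\<close>,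
  hence the rotation of \<open>b\<close>.
\<close>

lemma balanced_sum_table_iff_cond_E:
  assumes p: "0 < p" and r: "0 < r" and x: "x < r"
  shows "balanced p (sum_table M r p i a x) (sum_table M r p i a ((x+1) mod r)) (\<lambda>k\<in>{0..<p}. b ((k+1) mod p))
     \<longleftrightarrow> cond_E M p r i a b x"
proof -
  let ?x' = "(x+1) mod r"
  let ?s = "\<lambda>k. (i x + a k) mod M" and ?t = "\<lambda>k. (i ?x' + a k) mod M"
  have "?x' < r" "\<And>k. k < p \<Longrightarrow> (k+1) mod p < p"
    using r by auto
  then have "Q_exponents p (sum_table M r p i a x) (sum_table M r p i a ?x') (\<lambda>k\<in>{0..<p}. b ((k+1) mod p))
      = image_mset (\<lambda>k. (?t k, b ((k+1) mod p))) (mset [0..<p]) + image_mset (\<lambda>k. (?s ((k+1) mod p), b ((k+1) mod p))) (mset [0..<p])"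
    and "cnjQ_exponents p (sum_table M r p i a x) (sum_table M r p i a ?x') (\<lambda>k\<in>{0..<p}. b ((k+1) mod p))
      = image_mset (\<lambda>k. (?s k, b ((k+1) mod p))) (mset [0..<p]) + image_mset (\<lambda>k. (?t ((k+1) mod p), b ((k+1) mod p))) (mset [0..<p])"
    unfolding Q_exponents_def cnjQ_exponents_def using x
    by (auto intro!: arg_cong2[where f = "(+)"] image_mset_cong simp: sum_table_def)
  then show ?thesis
    unfolding balanced_def cond_E_def
    using image_mset_rotate[OF p, of "\<lambda>y. (?s y, b y)"] image_mset_rotate[OF p, of "\<lambda>y. (?t y, b y)"]
    by (simp add: add.commute)
qed

lemma sum_additive_balanced_tables:
  assumes N: "0 < N" and r: "0 < r" and p: "0 < p"
  shows "of_nat N * (\<Sum>B\<in>PiE {0..<r} (\<lambda>_. PiE {0..<p} (\<lambda>_. {0..<N})).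
                       of_bool (additive_mod N r p B \<and> balanced_cycle r p S B))
       = of_nat N ^ r * (\<Sum>b\<in>PiE {0..<p} (\<lambda>_. {0..<N}). of_bool (balanced_cycle r p S (\<lambda>_. b)) :: complex)"
proof -
  have "of_nat N * (\<Sum>B\<in>PiE {0..<r} (\<lambda>_. PiE {0..<p} (\<lambda>_. {0..<N})).
                       of_bool (additive_mod N r p B) * of_bool (balanced_cycle r p S B))
      = (\<Sum>c\<in>PiE {0..<r} (\<lambda>_. {0..<N}). \<Sum>b\<in>PiE {0..<p} (\<lambda>_. {0..<N}).
           of_bool (balanced_cycle r p S (sum_table N r p c b)) :: complex)"
    by (rule sum_additive_mod_tables[OF N r p])
  also have "\<dots> = (\<Sum>c\<in>PiE {0..<r} (\<lambda>_. {0..<N}). \<Sum>b\<in>PiE {0..<p} (\<lambda>_. {0..<N}).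
                     of_bool (balanced_cycle r p S (\<lambda>_. b)))"
    by (intro sum.cong refl) (simp add: balanced_cycle_sum_table)
  finally show ?thesis
    by (simp add: of_bool_conj card_PiE)
qed

lemma sum_balanced_sum_tables_eq_card:
  assumes p: "0 < p" and r: "0 < r"
  shows "(\<Sum>i\<in>PiE {0..<r} (\<lambda>_. {0..<M}). \<Sum>a\<in>PiE {0..<p} (\<lambda>_. {0..<M}). \<Sum>b\<in>PiE {0..<p} (\<lambda>_. {0..<N}).
            of_bool (balanced_cycle r p (sum_table M r p i a) (\<lambda>_. b)))
       = (of_nat (card {(i, a, b). i \<in> PiE {0..<r} (\<lambda>_. {0..<M}) \<and> a \<in> PiE {0..<p} (\<lambda>_. {0..<M})
                     \<and> b \<in> PiE {0..<p} (\<lambda>_. {0..<N}) \<and> (\<forall>x<r. cond_E M p r i a b x)}) :: complex)"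
proof -
  let ?I = "PiE {0..<r} (\<lambda>_. {0..<M})" and ?A = "PiE {0..<p} (\<lambda>_. {0..<M})"
    and ?B = "PiE {0..<p} (\<lambda>_. {0..<N})"
  let ?E = "\<lambda>i a b. \<forall>x<r. cond_E M p r i a b x"
  have "balanced_cycle r p (sum_table M r p i a) (\<lambda>_. \<lambda>k\<in>{0..<p}. b ((k+1) mod p)) \<longleftrightarrow> ?E i a b" for i a b
    unfolding balanced_cycle_def using balanced_sum_table_iff_cond_E[OF p r] by blast
  then have "(\<Sum>b\<in>?B. of_bool (balanced_cycle r p (sum_table M r p i a) (\<lambda>_. b)))
      = (\<Sum>b\<in>?B. of_bool (?E i a b) :: complex)" for i a
    by (subst sum_vectors_rotate[OF p]) simp
  moreover have "{(i, a, b). i \<in> ?I \<and> a \<in> ?A \<and> b \<in> ?B \<and> ?E i a b} = Sigma ?I (\<lambda>i. Sigma ?A (\<lambda>a. {b\<in>?B. ?E i a b}))"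
    by auto
  ultimately show ?thesis
    by (simp add: card_SigmaI finite_PiE Int_def conj_commute)
qed

lemma cpr_eq_sum_additive_tables:
  assumes M: "0 < M" and N: "0 < N" and p: "0 < p" and r: "0 < r"
  shows "cpr M N p r = of_nat M ^ (p * r) * of_nat N ^ (r * p) / of_nat (M * N) ^ ((p + 1) * r) *
           (\<Sum>S\<in>PiE {0..<r} (\<lambda>_. PiE {0..<p} (\<lambda>_. {0..<M})). of_bool (additive_mod M r p S) *
              (\<Sum>B\<in>PiE {0..<r} (\<lambda>_. PiE {0..<p} (\<lambda>_. {0..<N})).
                 of_bool (additive_mod N r p B \<and> balanced_cycle r p S B)))"
  unfolding cpr_eq_sum_Tentry[OF M p r] sum_prod_Tentry[OF p r N]
  by (simp add: sum_distrib_left of_bool_conj mult_ac)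

lemma sum_additive_tables_eq_card:
  assumes M: "0 < M" and N: "0 < N" and p: "0 < p" and r: "0 < r"
  shows "of_nat M * of_nat N *
           (\<Sum>S\<in>PiE {0..<r} (\<lambda>_. PiE {0..<p} (\<lambda>_. {0..<M})). of_bool (additive_mod M r p S) *
              (\<Sum>B\<in>PiE {0..<r} (\<lambda>_. PiE {0..<p} (\<lambda>_. {0..<N})).
                 of_bool (additive_mod N r p B \<and> balanced_cycle r p S B)))
       = of_nat N ^ r * (of_nat (card {(i, a, b). i \<in> PiE {0..<r} (\<lambda>_. {0..<M}) \<and> a \<in> PiE {0..<p} (\<lambda>_. {0..<M})
                     \<and> b \<in> PiE {0..<p} (\<lambda>_. {0..<N}) \<and> (\<forall>x<r. cond_E M p r i a b x)}) :: complex)"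
    (is "?lhs = _")
proof -
  have "?lhs = of_nat M * (\<Sum>S\<in>PiE {0..<r} (\<lambda>_. PiE {0..<p} (\<lambda>_. {0..<M})). of_bool (additive_mod M r p S) *
                 (of_nat N * (\<Sum>B\<in>PiE {0..<r} (\<lambda>_. PiE {0..<p} (\<lambda>_. {0..<N})).
                    of_bool (additive_mod N r p B \<and> balanced_cycle r p S B))))"
    by (simp add: sum_distrib_left mult_ac)
  also have "\<dots> = of_nat M * (\<Sum>S\<in>PiE {0..<r} (\<lambda>_. PiE {0..<p} (\<lambda>_. {0..<M})). of_bool (additive_mod M r p S) *
                 (of_nat N ^ r * (\<Sum>b\<in>PiE {0..<p} (\<lambda>_. {0..<N}). of_bool (balanced_cycle r p S (\<lambda>_. b)))))"
    unfolding sum_additive_balanced_tables[OF N r p] ..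
  also have "\<dots> = of_nat N ^ r * (\<Sum>i\<in>PiE {0..<r} (\<lambda>_. {0..<M}). \<Sum>a\<in>PiE {0..<p} (\<lambda>_. {0..<M}).
        \<Sum>b\<in>PiE {0..<p} (\<lambda>_. {0..<N}). of_bool (balanced_cycle r p (sum_table M r p i a) (\<lambda>_. b)))"
    unfolding sum_additive_mod_tables[OF M r p] by (simp add: sum_distrib_left)
  finally show ?thesis
    unfolding sum_balanced_sum_tables_eq_card[OF p r] .
qed

theorem theorem2p2:
  fixes M N p r :: nat
  assumes "M \<ge> 1" "N \<ge> 1" "p \<ge> 1" "r \<ge> 1"
  shows "cpr M N p r =
    of_nat (card {(i, a, b). i \<in> PiE {0..<r} (\<lambda>_. {0..<M}) \<and> a \<in> PiE {0..<p} (\<lambda>_. {0..<M})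
                   \<and> b \<in> PiE {0..<p} (\<lambda>_. {0..<N}) \<and> (\<forall>x<r. cond_E M p r i a b x)})
    / (of_nat M ^ (r + 1) * of_nat N)"
    (is "_ = ?card / _")
proof -
  have M: "0 < M" and N: "0 < N" and p: "0 < p" and r: "0 < r"
    using assms by auto
  let ?W = "\<Sum>S\<in>PiE {0..<r} (\<lambda>_. PiE {0..<p} (\<lambda>_. {0..<M})). of_bool (additive_mod M r p S) *
              (\<Sum>B\<in>PiE {0..<r} (\<lambda>_. PiE {0..<p} (\<lambda>_. {0..<N})).
                 of_bool (additive_mod N r p B \<and> balanced_cycle r p S B)) :: complex"
  have "(of_nat (M * N) :: complex) ^ ((p + 1) * r)
      = of_nat M ^ (p * r) * of_nat N ^ (r * p) * (of_nat M ^ r * of_nat N ^ r)"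
    by (simp add: power_mult_distrib power_add algebra_simps)
  then have "cpr M N p r = ?W / (of_nat M ^ r * of_nat N ^ r)"
    using cpr_eq_sum_additive_tables[OF M N p r] M N by simp
  also have "?W = of_nat N ^ r * ?card / (of_nat M * of_nat N)"
    using sum_additive_tables_eq_card[OF M N p r] M N by (simp add: field_simps)
  finally show ?thesis
    using M N by (simp add: field_simps)
qed

end
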